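(* The operator $\mathbf{V}\mapsto\mathbf{V}^{\mathsf{bar}}$ on the lattice of pseudovarieties of finite semigroups is continuous (order preserving and preserving directed joins), non-decreasing ($\mathbf{V}\subseteq\mathbf{V}^{\mathsf{bar}}$) and idempotent ($(\mathbf{V}^{\mathsf{bar}})^{\mathsf{bar}}=\mathbf{V}^{\mathsf{bar}}$). Further: (i) $\llbracket S\rrbracket^{\mathsf{bar}}=\llbracket S^{\mathsf{bar}}\rrbracket$ for every finite semigroup $S$; (ii) $\mathbf{RZ}\subseteq\mathbf{V}^{\mathsf{bar}}$ for every nontrivial pseudovariety $\mathbf{V}$. Consequently, if $\llbracket S\rrbracket=\llbracket T\rrbracket$ then $\llbracket S^{\mathsf{bar}}\rrbracket=\llbracket T^{\mathsf{bar}}\rrbracket$.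
   Context: All semigroups are finite. A pseudovariety is a class of finite semigroups closed under finite direct products, subsemigroups and homomorphic images; $\llbracket\mathscr{K}\rrbracket$ is the pseudovariety generated by a class $\mathscr{K}$. $\mathbf{RZ}$ is the pseudovariety of right zero semigroups ($xy=y$). For a semigroup $S$, $S^\bullet=S$ if $S$ is a monoid and $S^\bullet=S^I$ (external identity adjoined) otherwise; $S^{\mathsf{bar}}$ is the semigroup of transformations of $S^\bullet$ (acting on the right) consisting of right multiplications by elements of $S$ together with all constant maps on $S^\bullet$. For a pseudovariety $\mathbf{V}$, $\mathbf{V}^{\mathsf{bar}}=\llbracket S^{\mathsf{bar}}\mid S\in\mathbf{V}\rrbracket$. *)

theory Defs
  imports Main "HOL-Library.FuncSet"
begin

text \<open>A semigroup is given by a carrier set and a binary operation (the values of the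
operation outside the carrier are irrelevant). Semigroups are nonempty.\<close>

definition sgrp :: "'a set \<Rightarrow> ('a \<Rightarrow> 'a \<Rightarrow> 'a) \<Rightarrow> bool" where
  "sgrp A m \<longleftrightarrow> A \<noteq> {} \<and> (\<forall>x\<in>A. \<forall>y\<in>A. m x y \<in> A)
     \<and> (\<forall>x\<in>A. \<forall>y\<in>A. \<forall>z\<in>A. m (m x y) z = m x (m y z))"

definition fsg :: "'a set \<Rightarrow> ('a \<Rightarrow> 'a \<Rightarrow> 'a) \<Rightarrow> bool" where
  "fsg A m \<longleftrightarrow> finite A \<and> sgrp A m"

definition shom :: "('a \<Rightarrow> 'b) \<Rightarrow> 'a set \<Rightarrow> ('a \<Rightarrow> 'a \<Rightarrow> 'a) \<Rightarrow> 'b set \<Rightarrow> ('b \<Rightarrow> 'b \<Rightarrow> 'b) \<Rightarrow> bool" where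
  "shom h A m B n \<longleftrightarrow> (\<forall>x\<in>A. h x \<in> B) \<and> (\<forall>x\<in>A. \<forall>y\<in>A. h (m x y) = n (h x) (h y))"

definition isomorphic :: "'a set \<Rightarrow> ('a \<Rightarrow> 'a \<Rightarrow> 'a) \<Rightarrow> 'b set \<Rightarrow> ('b \<Rightarrow> 'b \<Rightarrow> 'b) \<Rightarrow> bool" where
  "isomorphic A m B n \<longleftrightarrow> (\<exists>h. shom h A m B n \<and> bij_betw h A B)"

definition prod_mult :: "('a \<Rightarrow> 'a \<Rightarrow> 'a) \<Rightarrow> ('b \<Rightarrow> 'b \<Rightarrow> 'b) \<Rightarrow> 'a \<times> 'b \<Rightarrow> 'a \<times> 'b \<Rightarrow> 'a \<times> 'b" where
  "prod_mult m n p q = (m (fst p) (fst q), n (snd p) (snd q))"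

text \<open>Classes of finite semigroups are represented by their members with carrier a
subset of nat (every finite semigroup has an isomorphic copy of this form).\<close>

type_synonym nsg = "nat set \<times> (nat \<Rightarrow> nat \<Rightarrow> nat)"

definition pseudovariety :: "nsg set \<Rightarrow> bool" where
  "pseudovariety V \<longleftrightarrow>
     (\<forall>(A, m)\<in>V. fsg A m)
   \<and> (\<forall>A m. fsg A m \<and> card A = 1 \<longrightarrow> (A, m) \<in> V)
   \<and> (\<forall>A m B n C p. (A, m) \<in> V \<and> (B, n) \<in> V \<and> fsg C p
          \<and> isomorphic (A \<times> B) (prod_mult m n) C p \<longrightarrow> (C, p) \<in> V)
   \<and> (\<forall>A m B. (A, m) \<in> V \<and> B \<subseteq> A \<and> sgrp B m \<longrightarrow> (B, m) \<in> V)
   \<and> (\<forall>A m B n h. (A, m) \<in> V \<and> fsg B n \<and> shom h A m B n \<and> h ` A = B \<longrightarrow> (B, n) \<in> V)"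

definition memb :: "nsg set \<Rightarrow> 'a set \<Rightarrow> ('a \<Rightarrow> 'a \<Rightarrow> 'a) \<Rightarrow> bool" where
  "memb V A m \<longleftrightarrow> (\<exists>(B, n)\<in>V. isomorphic B n A m)"

definition pv_gen :: "('a set \<times> ('a \<Rightarrow> 'a \<Rightarrow> 'a)) set \<Rightarrow> nsg set" where
  "pv_gen K = \<Inter>{V. pseudovariety V \<and> (\<forall>(A, m)\<in>K. memb V A m)}"

definition is_monoid :: "'a set \<Rightarrow> ('a \<Rightarrow> 'a \<Rightarrow> 'a) \<Rightarrow> bool" where
  "is_monoid A m \<longleftrightarrow> (\<exists>e\<in>A. \<forall>x\<in>A. m e x = x \<and> m x e = x)"

text \<open>S-dot: S itself if S is a monoid, else S with an external identity None adjoined.\<close>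
definition Sdot :: "'a set \<Rightarrow> ('a \<Rightarrow> 'a \<Rightarrow> 'a) \<Rightarrow> 'a option set" where
  "Sdot A m = (if is_monoid A m then Some ` A else insert None (Some ` A))"

fun dmult :: "('a \<Rightarrow> 'a \<Rightarrow> 'a) \<Rightarrow> 'a option \<Rightarrow> 'a option \<Rightarrow> 'a option" where
  "dmult m None y = y"
| "dmult m (Some a) None = Some a"
| "dmult m (Some a) (Some b) = Some (m a b)"

definition rmul :: "'a set \<Rightarrow> ('a \<Rightarrow> 'a \<Rightarrow> 'a) \<Rightarrow> 'a \<Rightarrow> 'a option \<Rightarrow> 'a option" where
  "rmul A m s = restrict (\<lambda>x. dmult m x (Some s)) (Sdot A m)"

definition cst :: "'a set \<Rightarrow> ('a \<Rightarrow> 'a \<Rightarrow> 'a) \<Rightarrow> 'a option \<Rightarrow> 'a option \<Rightarrow> 'a option" where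
  "cst A m c = restrict (\<lambda>x. c) (Sdot A m)"

definition bar_carrier :: "'a set \<Rightarrow> ('a \<Rightarrow> 'a \<Rightarrow> 'a) \<Rightarrow> ('a option \<Rightarrow> 'a option) set" where
  "bar_carrier A m = rmul A m ` A \<union> cst A m ` Sdot A m"

text \<open>Product of transformations acting on the right: x(fg) = (xf)g.\<close>
definition bar_mult :: "'a set \<Rightarrow> ('a \<Rightarrow> 'a \<Rightarrow> 'a)
    \<Rightarrow> ('a option \<Rightarrow> 'a option) \<Rightarrow> ('a option \<Rightarrow> 'a option) \<Rightarrow> ('a option \<Rightarrow> 'a option)" where
  "bar_mult A m f g = restrict (g \<circ> f) (Sdot A m)"

definition pv_bar :: "nsg set \<Rightarrow> nsg set" where
  "pv_bar V = pv_gen {(bar_carrier A m, bar_mult A m) | A m. (A, m) \<in> V}"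

definition RZ :: "nsg set" where
  "RZ = {(A, m). fsg A m \<and> (\<forall>x\<in>A. \<forall>y\<in>A. m x y = y)}"

definition directed :: "nsg set set \<Rightarrow> bool" where
  "directed \<V> \<longleftrightarrow> \<V> \<noteq> {} \<and> (\<forall>V\<in>\<V>. \<forall>W\<in>\<V>. \<exists>U\<in>\<V>. V \<subseteq> U \<and> W \<subseteq> U)"

definition pv_Join :: "nsg set set \<Rightarrow> nsg set" where
  "pv_Join \<V> = pv_gen (\<Union>\<V>)"

end

theory Submission
  imports Defs
begin

text \<open>
  Everything rests on divisibility properties of \<open>S\<^sup>b\<^sup>a\<^sup>r\<close>, the semigroup of right multiplications
  of \<open>S\<close> together with all constant maps of \<open>S\<^sup>\<bullet>\<close>. First, \<open>S\<close> divides \<open>S\<^sup>b\<^sup>a\<^sup>r\<close>. Second, if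
  \<open>S\<close> divides \<open>T\<close> then \<open>S\<^sup>b\<^sup>a\<^sup>r\<close> divides \<open>T\<^sup>b\<^sup>a\<^sup>r\<close>, and \<open>(S \<times> T)\<^sup>b\<^sup>a\<^sup>r\<close> divides
  \<open>S\<^sup>b\<^sup>a\<^sup>r \<times> T\<^sup>b\<^sup>a\<^sup>r\<close>; both follow from a general criterion for a transformation semigroup with
  all constants to divide another one. Hence the finite semigroups \<open>S\<close> with \<open>S\<^sup>b\<^sup>a\<^sup>r\<close> in a
  given pseudovariety form a pseudovariety, which yields \<open>\<lbrakk>S\<rbrakk>\<^sup>b\<^sup>a\<^sup>r = \<lbrakk>S\<^sup>b\<^sup>a\<^sup>r\<rbrakk>\<close>,
  monotonicity and continuity. Third, for a transformation semigroup \<open>T\<close> on \<open>X\<close> containing all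
  constants, \<open>T\<^sup>b\<^sup>a\<^sup>r\<close> divides the power \<open>T\<^sup>X\<close>, which yields idempotence. Finally the constant maps
  of \<open>S\<^sup>b\<^sup>a\<^sup>r\<close> form a right zero semigroup with at least \<open>|S|\<close> elements, and its powers contain
  every finite right zero semigroup.
\<close>

lemma sgrpD:
  assumes "sgrp A m"
  shows sgrp_nonempty: "A \<noteq> {}"
    and sgrp_closed: "x \<in> A \<Longrightarrow> y \<in> A \<Longrightarrow> m x y \<in> A"
    and sgrp_assoc: "x \<in> A \<Longrightarrow> y \<in> A \<Longrightarrow> z \<in> A \<Longrightarrow> m (m x y) z = m x (m y z)"
  using assms unfolding sgrp_def by blast+

lemma fsgD:
  assumes "fsg A m"
  shows fsg_finite: "finite A" and fsg_sgrp: "sgrp A m"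
  using assms unfolding fsg_def by blast+

lemma sgrp_hom_image:
  assumes "sgrp A m" "shom h A m B n" "h ` A = B"
  shows "sgrp B n"
proof -
  have hom: "h (m a b) = n (h a) (h b)" if "a \<in> A" "b \<in> A" for a b
    using assms(2) that unfolding shom_def by blast
  show ?thesis
    unfolding sgrp_def assms(3)[symmetric]
    using sgrpD[OF assms(1)] hom by (auto simp: image_iff) metis+
qed

lemma fsg_hom_image: "fsg A m \<Longrightarrow> shom h A m B n \<Longrightarrow> h ` A = B \<Longrightarrow> fsg B n"
  unfolding fsg_def using sgrp_hom_image by blast

lemma fsg_prod: "fsg A m \<Longrightarrow> fsg B n \<Longrightarrow> fsg (A \<times> B) (prod_mult m n)"
  unfolding fsg_def sgrp_def prod_mult_def by auto

lemma shom_comp: "shom h A m B n \<Longrightarrow> shom k B n C p \<Longrightarrow> shom (k \<circ> h) A m C p"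
  unfolding shom_def by auto

lemma isomorphic_imp_onto_hom: "isomorphic A m B n \<Longrightarrow> \<exists>h. shom h A m B n \<and> h ` A = B"
  unfolding isomorphic_def bij_betw_def by blast

lemma isomorphic_refl: "isomorphic A m A m"
  unfolding isomorphic_def shom_def by (rule exI[of _ id]) auto

lemma isomorphic_trans: "isomorphic A m B n \<Longrightarrow> isomorphic B n C p \<Longrightarrow> isomorphic A m C p"
  unfolding isomorphic_def using shom_comp bij_betw_trans by blast

lemma isomorphic_sym:
  assumes "isomorphic A m B n" "sgrp A m"
  shows "isomorphic B n A m"
proof -
  obtain h where h: "shom h A m B n" "bij_betw h A B"
    using assms(1) unfolding isomorphic_def by blast
  let ?g = "inv_into A h"
  have g: "bij_betw ?g B A" using h(2) by (rule bij_betw_inv_into)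
  have "?g (n x y) = m (?g x) (?g y)" if "x \<in> B" "y \<in> B" for x y
  proof -
    have gA: "?g x \<in> A" "?g y \<in> A" using g that by (auto dest: bij_betw_apply)
    hence "h (m (?g x) (?g y)) = n x y"
      using h that unfolding shom_def by (simp add: bij_betw_inv_into_right)
    thus ?thesis
      using gA h(2) sgrp_closed[OF assms(2)] by (metis bij_betw_inv_into_left)
  qed
  hence "shom ?g B n A m" using g unfolding shom_def by (auto dest: bij_betw_apply)
  thus ?thesis using g unfolding isomorphic_def by blast
qed

lemma isomorphic_fsg: "isomorphic A m B n \<Longrightarrow> fsg A m \<Longrightarrow> fsg B n"
  using fsg_hom_image isomorphic_imp_onto_hom by blast

lemma ex_nat_isomorphic:
  assumes "fsg A m"
  shows "\<exists>(B :: nat set) n. fsg B n \<and> isomorphic B n A m"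
proof -
  define B where "B = {0..<card A}"
  obtain g where g: "bij_betw g B A"
    using ex_bij_betw_nat_finite[OF fsg_finite[OF assms]] unfolding B_def by blast
  define n where "n x y = inv_into B g (m (g x) (g y))" for x y
  have "shom g B n A m"
    using g sgrp_closed[OF fsg_sgrp[OF assms]]
    unfolding shom_def n_def by (auto simp: bij_betw_apply bij_betw_inv_into_right)
  hence iso: "isomorphic B n A m" using g unfolding isomorphic_def by blast
  have gi: "bij_betw (inv_into B g) A B" using g by (rule bij_betw_inv_into)
  hence "shom (inv_into B g) A m B n"
    using g unfolding shom_def n_def by (auto simp: bij_betw_apply bij_betw_inv_into_right)
  hence "fsg B n" using fsg_hom_image[OF assms] gi by (auto simp: bij_betw_def)
  thus ?thesis using iso by blast
qed

section \<open>Pseudovarieties\<close>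

lemma pseudovarietyI:
  assumes "\<And>A m. (A, m) \<in> V \<Longrightarrow> fsg A m"
    and "\<And>A m. fsg A m \<Longrightarrow> card A = 1 \<Longrightarrow> (A, m) \<in> V"
    and "\<And>A m B n C p. (A, m) \<in> V \<Longrightarrow> (B, n) \<in> V \<Longrightarrow> fsg C p
          \<Longrightarrow> isomorphic (A \<times> B) (prod_mult m n) C p \<Longrightarrow> (C, p) \<in> V"
    and "\<And>A m B. (A, m) \<in> V \<Longrightarrow> B \<subseteq> A \<Longrightarrow> sgrp B m \<Longrightarrow> (B, m) \<in> V"
    and "\<And>A m B n h. (A, m) \<in> V \<Longrightarrow> fsg B n \<Longrightarrow> shom h A m B n \<Longrightarrow> h ` A = B \<Longrightarrow> (B, n) \<in> V"
  shows "pseudovariety V"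
  unfolding pseudovariety_def
proof (intro conjI allI impI ballI)
  fix x assume "x \<in> V"
  then show "case x of (A, m) \<Rightarrow> fsg A m" using assms(1) by (cases x) simp
qed (elim conjE, rule assms, assumption+)+

lemma pseudovarietyD:
  assumes "pseudovariety V"
  shows pseudovariety_fsg: "(A, m) \<in> V \<Longrightarrow> fsg A m"
    and pseudovariety_trivial: "fsg A m \<Longrightarrow> card A = 1 \<Longrightarrow> (A, m) \<in> V"
    and pseudovariety_prod: "(A, m) \<in> V \<Longrightarrow> (B, n) \<in> V \<Longrightarrow> fsg C p
          \<Longrightarrow> isomorphic (A \<times> B) (prod_mult m n) C p \<Longrightarrow> (C, p) \<in> V"
    and pseudovariety_sub: "(A, m) \<in> V \<Longrightarrow> B \<subseteq> A \<Longrightarrow> sgrp B m \<Longrightarrow> (B, m) \<in> V"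
    and pseudovariety_hom_image:
      "(A, m) \<in> V \<Longrightarrow> fsg B n \<Longrightarrow> shom h A m B n \<Longrightarrow> h ` A = B \<Longrightarrow> (B, n) \<in> V"
proof -
  note pv = assms[unfolded pseudovariety_def]
  show "(A, m) \<in> V \<Longrightarrow> fsg A m" using pv[THEN conjunct1] by fast
  show "fsg A m \<Longrightarrow> card A = 1 \<Longrightarrow> (A, m) \<in> V" using pv[THEN conjunct2, THEN conjunct1] by blast
  show "(A, m) \<in> V \<Longrightarrow> (B, n) \<in> V \<Longrightarrow> fsg C p
          \<Longrightarrow> isomorphic (A \<times> B) (prod_mult m n) C p \<Longrightarrow> (C, p) \<in> V"
    using pv[THEN conjunct2, THEN conjunct2, THEN conjunct1] by blast
  show "(A, m) \<in> V \<Longrightarrow> B \<subseteq> A \<Longrightarrow> sgrp B m \<Longrightarrow> (B, m) \<in> V"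
    using pv[THEN conjunct2, THEN conjunct2, THEN conjunct2, THEN conjunct1] by blast
  show "(A, m) \<in> V \<Longrightarrow> fsg B n \<Longrightarrow> shom h A m B n \<Longrightarrow> h ` A = B \<Longrightarrow> (B, n) \<in> V"
    using pv[THEN conjunct2, THEN conjunct2, THEN conjunct2, THEN conjunct2] by blast
qed

lemma pseudovariety_Inter:
  assumes "\<W> \<noteq> {}" and pv: "\<And>W. W \<in> \<W> \<Longrightarrow> pseudovariety W"
  shows "pseudovariety (\<Inter>\<W>)"
proof (rule pseudovarietyI)
  fix A m assume "(A, m) \<in> \<Inter>\<W>"
  then show "fsg A m" using assms(1) pseudovariety_fsg[OF pv] by blast
next
  fix A :: "nat set" and m assume "fsg A m" "card A = 1"
  then show "(A, m) \<in> \<Inter>\<W>" using pseudovariety_trivial[OF pv] by blast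
next
  fix A m B n and C :: "nat set" and p
  assume prems: "(A, m) \<in> \<Inter>\<W>" "(B, n) \<in> \<Inter>\<W>" "fsg C p" "isomorphic (A \<times> B) (prod_mult m n) C p"
  show "(C, p) \<in> \<Inter>\<W>"
  proof
    fix W assume W: "W \<in> \<W>"
    show "(C, p) \<in> W"
      using InterD[OF prems(1) W] InterD[OF prems(2) W] prems(3,4)
      by (rule pseudovariety_prod[OF pv[OF W]])
  qed
next
  fix A m B assume prems: "(A, m) \<in> \<Inter>\<W>" "B \<subseteq> A" "sgrp B m"
  show "(B, m) \<in> \<Inter>\<W>"
  proof
    fix W assume W: "W \<in> \<W>"
    show "(B, m) \<in> W" using InterD[OF prems(1) W] prems(2,3) by (rule pseudovariety_sub[OF pv[OF W]])
  qed
next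
  fix A m h and B :: "nat set" and n
  assume prems: "(A, m) \<in> \<Inter>\<W>" "fsg B n" "shom h A m B n" "h ` A = B"
  show "(B, n) \<in> \<Inter>\<W>"
  proof
    fix W assume W: "W \<in> \<W>"
    show "(B, n) \<in> W"
      using InterD[OF prems(1) W] prems(2-4) by (rule pseudovariety_hom_image[OF pv[OF W]])
  qed
qed

lemma pseudovariety_Union_directed:
  assumes dir: "directed \<V>" and pv: "\<And>V. V \<in> \<V> \<Longrightarrow> pseudovariety V"
  shows "pseudovariety (\<Union>\<V>)"
proof (rule pseudovarietyI)
  fix A m assume "(A, m) \<in> \<Union>\<V>"
  then show "fsg A m" using pseudovariety_fsg[OF pv] by blast
next
  fix A :: "nat set" and m assume "fsg A m" "card A = 1"
  moreover obtain V where "V \<in> \<V>" using dir unfolding directed_def by blast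
  ultimately show "(A, m) \<in> \<Union>\<V>" using pseudovariety_trivial[OF pv] by blast
next
  fix A m B n and C :: "nat set" and p
  assume prems: "(A, m) \<in> \<Union>\<V>" "(B, n) \<in> \<Union>\<V>" "fsg C p" "isomorphic (A \<times> B) (prod_mult m n) C p"
  obtain V1 V2 where V: "V1 \<in> \<V>" "V2 \<in> \<V>" "(A, m) \<in> V1" "(B, n) \<in> V2"
    using prems(1,2) by blast
  then obtain U where U: "U \<in> \<V>" "(A, m) \<in> U" "(B, n) \<in> U"
    using dir unfolding directed_def by blast
  have "(C, p) \<in> U" using U(2,3) prems(3,4) by (rule pseudovariety_prod[OF pv[OF U(1)]])
  then show "(C, p) \<in> \<Union>\<V>" using U(1) by blast
next
  fix A m B assume prems: "(A, m) \<in> \<Union>\<V>" "B \<subseteq> A" "sgrp B m"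
  then obtain V where "V \<in> \<V>" "(A, m) \<in> V" by blast
  then show "(B, m) \<in> \<Union>\<V>" using pseudovariety_sub[OF pv _ prems(2,3)] by blast
next
  fix A m h and B :: "nat set" and n
  assume prems: "(A, m) \<in> \<Union>\<V>" "fsg B n" "shom h A m B n" "h ` A = B"
  then obtain V where "V \<in> \<V>" "(A, m) \<in> V" by blast
  then show "(B, n) \<in> \<Union>\<V>" using pseudovariety_hom_image[OF pv _ prems(2-4)] by blast
qed

lemma pseudovariety_finite_semigroups: "pseudovariety {(A, m). fsg A m}"
  by (rule pseudovarietyI) (auto simp: fsg_def intro: finite_subset)

lemma membI: "(B, n) \<in> V \<Longrightarrow> isomorphic B n A m \<Longrightarrow> memb V A m"
  unfolding memb_def by blast

lemma membE:
  assumes "memb V A m"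
  obtains B n where "(B, n) \<in> V" "isomorphic B n A m"
  using assms unfolding memb_def by blast

lemma mem_imp_memb: "(A, m) \<in> V \<Longrightarrow> memb V A m"
  using membI isomorphic_refl by blast

lemma memb_fsg:
  assumes "pseudovariety V" "memb V A m"
  shows "fsg A m"
proof -
  obtain B n where "(B, n) \<in> V" "isomorphic B n A m" using assms(2) by (rule membE)
  thus ?thesis using isomorphic_fsg pseudovariety_fsg[OF assms(1)] by blast
qed

lemma memb_imp_mem:
  assumes V: "pseudovariety V" and "memb V (A :: nat set) m"
  shows "(A, m) \<in> V"
proof -
  obtain B n where B: "(B, n) \<in> V" "isomorphic B n A m" using assms(2) by (rule membE)
  moreover obtain h where "shom h B n A m" "h ` B = A" using isomorphic_imp_onto_hom[OF B(2)] by blast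
  ultimately show ?thesis using pseudovariety_hom_image[OF V] memb_fsg[OF assms] by blast
qed

lemma memb_isomorphic:
  assumes "memb V A m" "isomorphic A m B n"
  shows "memb V B n"
proof -
  obtain C p where "(C, p) \<in> V" "isomorphic C p A m" using assms(1) by (rule membE)
  thus ?thesis using isomorphic_trans[OF _ assms(2)] membI by blast
qed

lemma memb_hom_image:
  assumes V: "pseudovariety V" and "memb V A m" "shom h A m B n" "h ` A = B" "fsg B n"
  shows "memb V B n"
proof -
  obtain C p where C: "(C, p) \<in> V" "isomorphic C p A m" using assms(2) by (rule membE)
  then obtain g where g: "shom g C p A m" "g ` C = A" using isomorphic_imp_onto_hom by blast
  obtain D :: "nat set" and q where D: "fsg D q" "isomorphic D q B n"
    using ex_nat_isomorphic[OF assms(5)] by blast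
  then obtain k where k: "shom k B n D q" "k ` B = D"
    using isomorphic_sym fsgD(2) isomorphic_imp_onto_hom by metis
  have "shom (k \<circ> (h \<circ> g)) C p D q" using shom_comp[OF shom_comp[OF g(1) assms(3)] k(1)] .
  moreover have "(k \<circ> (h \<circ> g)) ` C = D" using g(2) assms(4) k(2) by (metis image_comp)
  ultimately have "(D, q) \<in> V" using pseudovariety_hom_image[OF V C(1) D(1)] by blast
  thus ?thesis using \<open>isomorphic D q B n\<close> by (rule membI)
qed

lemma memb_subsemigroup:
  assumes V: "pseudovariety V" and "memb V A m" "B \<subseteq> A" "sgrp B m"
  shows "memb V B m"
proof -
  obtain C p where C: "(C, p) \<in> V" "isomorphic C p A m" using assms(2) by (rule membE)
  obtain g where g: "shom g C p A m" "bij_betw g C A" using C(2) unfolding isomorphic_def by blast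
  define C' where "C' = {c \<in> C. g c \<in> B}"
  have sC: "sgrp C p" using fsg_sgrp[OF pseudovariety_fsg[OF V C(1)]] .
  have gC': "g ` C' = B" using g(2) assms(3) unfolding C'_def bij_betw_def by blast
  have "sgrp C' p"
    unfolding sgrp_def
  proof (intro conjI ballI)
    show "C' \<noteq> {}" using gC' sgrp_nonempty[OF assms(4)] by blast
  next
    fix x y assume xy: "x \<in> C'" "y \<in> C'"
    have "p x y \<in> C" using xy sgrp_closed[OF sC] unfolding C'_def by blast
    moreover have "g (p x y) = m (g x) (g y)" using xy g(1) unfolding C'_def shom_def by blast
    ultimately show "p x y \<in> C'" using xy sgrp_closed[OF assms(4)] unfolding C'_def by simp
  next
    fix x y z assume "x \<in> C'" "y \<in> C'" "z \<in> C'"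
    thus "p (p x y) z = p x (p y z)" using sgrp_assoc[OF sC] unfolding C'_def by blast
  qed
  moreover have "C' \<subseteq> C" unfolding C'_def by blast
  ultimately have "(C', p) \<in> V" by (rule pseudovariety_sub[OF V C(1), rotated])
  moreover have "bij_betw g C' B"
    using gC' inj_on_subset[OF bij_betw_imp_inj_on[OF g(2)] \<open>C' \<subseteq> C\<close>] unfolding bij_betw_def by blast
  hence "isomorphic C' p B m"
    using g(1) \<open>C' \<subseteq> C\<close> unfolding isomorphic_def shom_def bij_betw_def by blast
  ultimately show ?thesis by (rule membI)
qed

lemma memb_divisorI:
  assumes V: "pseudovariety V" and P: "memb V P p" and "fsg T t"
    and U: "U \<subseteq> P" "U \<noteq> {}" "\<And>x y. x \<in> U \<Longrightarrow> y \<in> U \<Longrightarrow> p x y \<in> U"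
    and h: "\<And>x y. x \<in> U \<Longrightarrow> y \<in> U \<Longrightarrow> h (p x y) = t (h x) (h y)" "h ` U = T"
  shows "memb V T t"
proof -
  have "sgrp U p"
    using U sgrp_assoc[OF fsg_sgrp[OF memb_fsg[OF V P]]] unfolding sgrp_def by (meson subsetD)
  hence "memb V U p" using memb_subsemigroup[OF V P U(1)] by blast
  moreover have "shom h U p T t" using h unfolding shom_def by blast
  ultimately show ?thesis using memb_hom_image[OF V _ _ h(2) \<open>fsg T t\<close>] by blast
qed

lemma memb_prod:
  assumes V: "pseudovariety V" and A: "memb V A m" and B: "memb V B n"
  shows "memb V (A \<times> B) (prod_mult m n)"
proof -
  obtain C p where C: "(C, p) \<in> V" "isomorphic C p A m" using A by (rule membE)
  then obtain g where g: "shom g C p A m" "bij_betw g C A" unfolding isomorphic_def by blast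
  obtain D q where D: "(D, q) \<in> V" "isomorphic D q B n" using B by (rule membE)
  then obtain k where k: "shom k D q B n" "bij_betw k D B" unfolding isomorphic_def by blast
  have fAB: "fsg (A \<times> B) (prod_mult m n)" using fsg_prod[OF memb_fsg[OF V A] memb_fsg[OF V B]] .
  obtain E :: "nat set" and r where E: "fsg E r" "isomorphic E r (A \<times> B) (prod_mult m n)"
    using ex_nat_isomorphic[OF fAB] by blast
  have "shom (map_prod g k) (C \<times> D) (prod_mult p q) (A \<times> B) (prod_mult m n)"
    using g(1) k(1) unfolding shom_def prod_mult_def by auto
  hence "isomorphic (C \<times> D) (prod_mult p q) (A \<times> B) (prod_mult m n)"
    using bij_betw_map_prod[OF g(2) k(2)] unfolding isomorphic_def by blast
  hence "isomorphic (C \<times> D) (prod_mult p q) E r"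
    using isomorphic_trans isomorphic_sym[OF E(2) fsg_sgrp[OF E(1)]] by blast
  hence "(E, r) \<in> V" using pseudovariety_prod[OF V C(1) D(1) E(1)] by blast
  thus ?thesis using E(2) by (rule membI)
qed

definition pow_mult :: "'i set \<Rightarrow> ('a \<Rightarrow> 'a \<Rightarrow> 'a) \<Rightarrow> ('i \<Rightarrow> 'a) \<Rightarrow> ('i \<Rightarrow> 'a) \<Rightarrow> 'i \<Rightarrow> 'a" where
  "pow_mult I m f g = (\<lambda>i\<in>I. m (f i) (g i))"

lemma memb_trivial:
  assumes V: "pseudovariety V" and "fsg B n" "card B = 1"
  shows "memb V B n"
proof -
  obtain b where b: "B = {b}" using assms(3) card_1_singletonE by blast
  have "n b b = b" using sgrp_closed[OF fsg_sgrp[OF assms(2)]] b by blast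
  hence "isomorphic {0 :: nat} (\<lambda>_ _. 0) B n"
    unfolding isomorphic_def shom_def using b by (intro exI[of _ "\<lambda>_. b"]) (simp add: bij_betw_def)
  moreover have "({0 :: nat}, \<lambda>_ _. 0) \<in> V"
    by (rule pseudovariety_trivial[OF V]) (simp_all add: fsg_def sgrp_def)
  ultimately show ?thesis by (intro membI)
qed

lemma memb_power:
  assumes W: "pseudovariety W" and A: "memb W A m" and "finite I"
  shows "memb W (Pi\<^sub>E I (\<lambda>_. A)) (pow_mult I m)"
  using \<open>finite I\<close>
proof (induction I rule: finite_induct)
  case empty
  have "fsg {\<lambda>_. undefined} (pow_mult {} m)" unfolding fsg_def sgrp_def pow_mult_def by simp
  hence "memb W {\<lambda>_. undefined} (pow_mult {} m)" by (rule memb_trivial[OF W]) simp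
  thus ?case by simp
next
  case (insert i I)
  let ?\<phi> = "\<lambda>(a, f). f(i := a)"
  have "memb W (A \<times> Pi\<^sub>E I (\<lambda>_. A)) (prod_mult m (pow_mult I m))" by (rule memb_prod[OF W A insert.IH])
  moreover have "shom ?\<phi> (A \<times> Pi\<^sub>E I (\<lambda>_. A)) (prod_mult m (pow_mult I m))
      (Pi\<^sub>E (insert i I) (\<lambda>_. A)) (pow_mult (insert i I) m)"
    unfolding shom_def
  proof (intro conjI ballI)
    fix q assume "q \<in> A \<times> Pi\<^sub>E I (\<lambda>_. A)"
    thus "?\<phi> q \<in> Pi\<^sub>E (insert i I) (\<lambda>_. A)" using PiE_fun_upd by fastforce
  next
    fix q r assume "q \<in> A \<times> Pi\<^sub>E I (\<lambda>_. A)" "r \<in> A \<times> Pi\<^sub>E I (\<lambda>_. A)"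
    thus "?\<phi> (prod_mult m (pow_mult I m) q r) = pow_mult (insert i I) m (?\<phi> q) (?\<phi> r)"
      using insert.hyps(2) unfolding prod_mult_def pow_mult_def
      by (cases q, cases r) (auto simp: fun_eq_iff)
  qed
  moreover have "bij_betw ?\<phi> (A \<times> Pi\<^sub>E I (\<lambda>_. A)) (Pi\<^sub>E (insert i I) (\<lambda>_. A))"
    unfolding bij_betw_def PiE_insert_eq using inj_combinator[OF insert.hyps(2)] by simp
  ultimately show ?case using memb_isomorphic unfolding isomorphic_def by blast
qed

lemma pseudovariety_pv_gen:
  assumes "\<forall>(A, m)\<in>K. fsg A m"
  shows "pseudovariety (pv_gen K)"
  unfolding pv_gen_def
proof (rule pseudovariety_Inter)
  have "memb {(A, m). fsg A m} A m" if fA: "fsg A m" for A :: "'a set" and m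
  proof -
    obtain B :: "nat set" and n where "fsg B n" "isomorphic B n A m" using ex_nat_isomorphic[OF fA] by blast
    thus ?thesis by (intro membI) simp_all
  qed
  hence "\<forall>(A, m)\<in>K. memb {(A, m). fsg A m} A m" using assms by blast
  thus "{V. pseudovariety V \<and> (\<forall>(A, m)\<in>K. memb V A m)} \<noteq> {}"
    using pseudovariety_finite_semigroups by blast
qed auto

lemma pv_gen_least: "pseudovariety W \<Longrightarrow> (\<And>A m. (A, m) \<in> K \<Longrightarrow> memb W A m) \<Longrightarrow> pv_gen K \<subseteq> W"
  unfolding pv_gen_def by blast

lemma pv_gen_mono: "K \<subseteq> K' \<Longrightarrow> pv_gen K \<subseteq> pv_gen K'"
  unfolding pv_gen_def by blast

lemma memb_pv_gen:
  assumes "\<forall>(A, m)\<in>K. fsg A m" "(A, m) \<in> K"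
  shows "memb (pv_gen K) A m"
proof -
  have fA: "fsg A m" using assms by blast
  obtain B :: "nat set" and n where B: "fsg B n" "isomorphic B n A m" using ex_nat_isomorphic[OF fA] by blast
  have "(B, n) \<in> W" if "pseudovariety W" "\<forall>(A, m)\<in>K. memb W A m" for W
  proof -
    have "memb W A m" using that(2) assms(2) by blast
    hence "memb W B n" using memb_isomorphic isomorphic_sym[OF B(2) fsg_sgrp[OF B(1)]] by blast
    thus ?thesis by (rule memb_imp_mem[OF that(1)])
  qed
  hence "(B, n) \<in> pv_gen K" unfolding pv_gen_def by blast
  thus ?thesis using B(2) by (rule membI)
qed

lemma pv_gen_pseudovariety:
  assumes "pseudovariety V"
  shows "pv_gen V = V"
proof
  show "pv_gen V \<subseteq> V" using pv_gen_least[OF assms mem_imp_memb] .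
  show "V \<subseteq> pv_gen V"
    unfolding pv_gen_def
  proof (intro subsetI InterI)
    fix x W assume "x \<in> V" "W \<in> {W. pseudovariety W \<and> (\<forall>(A, m)\<in>V. memb W A m)}"
    then show "x \<in> W" using memb_imp_mem by (cases x) auto
  qed
qed

lemma pv_gen_UN_pv_gen:
  assumes "\<And>i. i \<in> I \<Longrightarrow> \<forall>(A, m)\<in>K i. fsg A m"
  shows "pv_gen (\<Union>i\<in>I. pv_gen (K i)) = pv_gen (\<Union>i\<in>I. K i)"
proof
  have fsgK: "\<forall>(A, m)\<in>(\<Union>i\<in>I. K i). fsg A m" using assms by blast
  have pv: "pseudovariety (pv_gen (K i))" if "i \<in> I" for i using pseudovariety_pv_gen assms that by blast
  hence fsg_gen: "\<forall>(A, m)\<in>(\<Union>i\<in>I. pv_gen (K i)). fsg A m" using pseudovariety_fsg by blast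
  show "pv_gen (\<Union>i\<in>I. pv_gen (K i)) \<subseteq> pv_gen (\<Union>i\<in>I. K i)"
  proof (rule pv_gen_least[OF pseudovariety_pv_gen[OF fsgK]])
    fix A m assume "(A, m) \<in> (\<Union>i\<in>I. pv_gen (K i))"
    then obtain i where "i \<in> I" "(A, m) \<in> pv_gen (K i)" by blast
    moreover have "pv_gen (K i) \<subseteq> pv_gen (\<Union>i\<in>I. K i)" using \<open>i \<in> I\<close> by (intro pv_gen_mono) blast
    ultimately show "memb (pv_gen (\<Union>i\<in>I. K i)) A m" using mem_imp_memb by blast
  qed
  show "pv_gen (\<Union>i\<in>I. K i) \<subseteq> pv_gen (\<Union>i\<in>I. pv_gen (K i))"
  proof (rule pv_gen_least[OF pseudovariety_pv_gen[OF fsg_gen]])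
    fix A m assume "(A, m) \<in> (\<Union>i\<in>I. K i)"
    then obtain i where i: "i \<in> I" "(A, m) \<in> K i" by blast
    then obtain B n where "(B, n) \<in> pv_gen (K i)" "isomorphic B n A m"
      using memb_pv_gen[OF assms] by (metis membE)
    thus "memb (pv_gen (\<Union>i\<in>I. pv_gen (K i))) A m"
      using memb_pv_gen[OF fsg_gen] memb_isomorphic i(1) by blast
  qed
qed

section \<open>Transformation semigroups with all constants\<close>

text \<open>Transformations act on the right, so the product of \<open>f\<close> and \<open>g\<close> is \<open>g \<circ> f\<close>.\<close>

abbreviation rcompose :: "'a set \<Rightarrow> ('a \<Rightarrow> 'a) \<Rightarrow> ('a \<Rightarrow> 'a) \<Rightarrow> 'a \<Rightarrow> 'a" where
  "rcompose X f g \<equiv> compose X g f"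

definition transf_closed :: "'a set \<Rightarrow> ('a \<Rightarrow> 'a) set \<Rightarrow> bool" where
  "transf_closed X F \<longleftrightarrow> F \<subseteq> X \<rightarrow>\<^sub>E X \<and> (\<forall>f\<in>F. \<forall>g\<in>F. rcompose X f g \<in> F)"

definition with_consts :: "'a set \<Rightarrow> ('a \<Rightarrow> 'a) set \<Rightarrow> ('a \<Rightarrow> 'a) set" where
  "with_consts X F = F \<union> (\<lambda>c. \<lambda>_\<in>X. c) ` X"

lemma rcompose_assoc:
  "f \<in> X \<rightarrow>\<^sub>E X \<Longrightarrow> g \<in> X \<rightarrow>\<^sub>E X \<Longrightarrow> rcompose X (rcompose X f g) h = rcompose X f (rcompose X g h)"
  by (simp add: compose_assoc[where B = X] PiE_iff Pi_iff)

lemma rcompose_const_right: "f \<in> X \<rightarrow> X \<Longrightarrow> rcompose X f (\<lambda>_\<in>X. c) = (\<lambda>_\<in>X. c)"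
  unfolding compose_def by (rule restrict_ext) auto

lemma rcompose_const_left: "c \<in> X \<Longrightarrow> rcompose X (\<lambda>_\<in>X. c) g = (\<lambda>_\<in>X. g c)"
  by (auto simp: compose_def)

lemma const_in_with_consts: "c \<in> X \<Longrightarrow> (\<lambda>_\<in>X. c) \<in> with_consts X F"
  unfolding with_consts_def by blast

lemma with_consts_PiE: "transf_closed X F \<Longrightarrow> with_consts X F \<subseteq> X \<rightarrow>\<^sub>E X"
  unfolding transf_closed_def with_consts_def by auto

lemma with_consts_closed:
  assumes F: "transf_closed X F" and "f \<in> with_consts X F" "g \<in> with_consts X F"
  shows "rcompose X f g \<in> with_consts X F"
proof -
  have f: "f \<in> X \<rightarrow>\<^sub>E X" and g: "g \<in> X \<rightarrow>\<^sub>E X" using with_consts_PiE[OF F] assms(2,3) by blast+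
  consider "f \<in> F" "g \<in> F" | c where "c \<in> X" "f = (\<lambda>_\<in>X. c)" | c where "c \<in> X" "g = (\<lambda>_\<in>X. c)"
    using assms(2,3) unfolding with_consts_def by blast
  then show ?thesis
  proof cases
    case 1
    then show ?thesis using F unfolding transf_closed_def with_consts_def by blast
  next
    case 2
    moreover have "g c \<in> X" using g 2(1) by auto
    ultimately show ?thesis using rcompose_const_left[OF 2(1), of g] const_in_with_consts by metis
  next
    case 3
    moreover have "f \<in> X \<rightarrow> X" using f by (simp add: PiE_iff Pi_iff)
    ultimately show ?thesis using rcompose_const_right[of f X c] assms(3) by simp
  qed
qed

lemma fsg_with_consts:
  assumes "finite X" "X \<noteq> {}" and F: "transf_closed X F"
  shows "fsg (with_consts X F) (rcompose X)"
  unfolding fsg_def sgrp_def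
proof (intro conjI ballI)
  have "finite (X \<rightarrow>\<^sub>E X)" using assms(1) by (intro finite_PiE)
  thus "finite (with_consts X F)" using with_consts_PiE[OF F] by (rule finite_subset[rotated])
  obtain c where "c \<in> X" using assms(2) by blast
  thus "with_consts X F \<noteq> {}" using const_in_with_consts[of c X F] by auto
next
  fix f g assume "f \<in> with_consts X F" "g \<in> with_consts X F"
  thus "rcompose X f g \<in> with_consts X F" by (rule with_consts_closed[OF F])
next
  fix f g h assume "f \<in> with_consts X F" "g \<in> with_consts X F"
  hence "f \<in> X \<rightarrow>\<^sub>E X" "g \<in> X \<rightarrow>\<^sub>E X" using with_consts_PiE[OF F] by auto
  thus "rcompose X (rcompose X f g) h = rcompose X f (rcompose X g h)" by (rule rcompose_assoc)
qed

definition respects_fibres :: "'b set \<Rightarrow> ('b \<Rightarrow> 'a) \<Rightarrow> ('b \<Rightarrow> 'b) \<Rightarrow> bool" where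
  "respects_fibres Y \<pi> g \<longleftrightarrow> g ` Y \<subseteq> Y \<and> (\<forall>y\<in>Y. \<forall>y'\<in>Y. \<pi> y = \<pi> y' \<longrightarrow> \<pi> (g y) = \<pi> (g y'))"

definition induced_transf :: "'b set \<Rightarrow> ('b \<Rightarrow> 'a) \<Rightarrow> ('b \<Rightarrow> 'b) \<Rightarrow> 'a \<Rightarrow> 'a" where
  "induced_transf Y \<pi> g = (\<lambda>x\<in>\<pi> ` Y. \<pi> (g (SOME y. y \<in> Y \<and> \<pi> y = x)))"

lemma induced_transf_apply:
  assumes "respects_fibres Y \<pi> g" "y \<in> Y"
  shows "induced_transf Y \<pi> g (\<pi> y) = \<pi> (g y)"
proof -
  let ?y = "SOME y'. y' \<in> Y \<and> \<pi> y' = \<pi> y"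
  have y': "?y \<in> Y \<and> \<pi> ?y = \<pi> y" using assms(2) by (intro someI) blast
  have "induced_transf Y \<pi> g (\<pi> y) = \<pi> (g ?y)" using assms(2) unfolding induced_transf_def by simp
  also have "\<dots> = \<pi> (g y)" using assms y' unfolding respects_fibres_def by blast
  finally show ?thesis .
qed

lemma induced_transf_eqI:
  assumes "respects_fibres Y \<pi> g" "f \<in> extensional (\<pi> ` Y)" "\<And>y. y \<in> Y \<Longrightarrow> \<pi> (g y) = f (\<pi> y)"
  shows "induced_transf Y \<pi> g = f"
proof (rule extensionalityI[where A = "\<pi> ` Y"])
  show "induced_transf Y \<pi> g \<in> extensional (\<pi> ` Y)" by (simp add: induced_transf_def)
  fix x assume "x \<in> \<pi> ` Y"
  then obtain y where "y \<in> Y" "x = \<pi> y" by blast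
  thus "induced_transf Y \<pi> g x = f x" using induced_transf_apply[OF assms(1)] assms(3) by metis
qed (rule assms(2))

lemma respects_fibres_rcompose:
  assumes "Y \<subseteq> X" and g: "respects_fibres Y \<pi> g" and h: "respects_fibres Y \<pi> h"
  shows "respects_fibres Y \<pi> (rcompose X g h)"
    and "induced_transf Y \<pi> (rcompose X g h) = rcompose (\<pi> ` Y) (induced_transf Y \<pi> g) (induced_transf Y \<pi> h)"
proof -
  have gY: "g y \<in> Y" if "y \<in> Y" for y using g that unfolding respects_fibres_def by blast
  have app: "rcompose X g h y = h (g y)" if "y \<in> Y" for y using assms(1) that by (auto simp: compose_eq)
  show resp: "respects_fibres Y \<pi> (rcompose X g h)"
    unfolding respects_fibres_def
  proof (intro conjI ballI impI subsetI)
    fix z assume "z \<in> rcompose X g h ` Y"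
    then obtain y where "y \<in> Y" "z = h (g y)" using app by auto
    thus "z \<in> Y" using gY h unfolding respects_fibres_def by blast
  next
    fix y y' assume "y \<in> Y" "y' \<in> Y" "\<pi> y = \<pi> y'"
    hence "\<pi> (g y) = \<pi> (g y')" using g unfolding respects_fibres_def by blast
    thus "\<pi> (rcompose X g h y) = \<pi> (rcompose X g h y')"
      using h gY app \<open>y \<in> Y\<close> \<open>y' \<in> Y\<close> unfolding respects_fibres_def by metis
  qed
  show "induced_transf Y \<pi> (rcompose X g h) = rcompose (\<pi> ` Y) (induced_transf Y \<pi> g) (induced_transf Y \<pi> h)"
  proof (rule induced_transf_eqI[OF resp])
    fix y assume "y \<in> Y"
    thus "\<pi> (rcompose X g h y) = rcompose (\<pi> ` Y) (induced_transf Y \<pi> g) (induced_transf Y \<pi> h) (\<pi> y)"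
      using app gY induced_transf_apply[OF g] induced_transf_apply[OF h] by (simp add: compose_eq)
  qed simp
qed

lemma respects_fibres_const:
  assumes "Y \<subseteq> X" "c \<in> Y"
  shows "respects_fibres Y \<pi> (\<lambda>_\<in>X. c)" and "induced_transf Y \<pi> (\<lambda>_\<in>X. c) = (\<lambda>_\<in>\<pi> ` Y. \<pi> c)"
proof -
  show resp: "respects_fibres Y \<pi> (\<lambda>_\<in>X. c)" using assms unfolding respects_fibres_def by auto
  show "induced_transf Y \<pi> (\<lambda>_\<in>X. c) = (\<lambda>_\<in>\<pi> ` Y. \<pi> c)"
    using assms by (intro induced_transf_eqI[OF resp]) auto
qed

lemma with_consts_subset_induced_image:
  assumes F: "transf_closed X F" and Y: "Y \<subseteq> X'" and X: "\<pi> ` Y = X"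
    and lift: "\<And>f. f \<in> F \<Longrightarrow> \<exists>f'\<in>with_consts X' F'. \<forall>y\<in>Y. f' y \<in> Y \<and> \<pi> (f' y) = f (\<pi> y)"
  shows "with_consts X F \<subseteq> induced_transf Y \<pi> ` {g \<in> with_consts X' F'. respects_fibres Y \<pi> g}"
proof
  fix f assume "f \<in> with_consts X F"
  then consider "f \<in> F" | x where "x \<in> X" "f = (\<lambda>_\<in>X. x)" unfolding with_consts_def by auto
  then show "f \<in> induced_transf Y \<pi> ` {g \<in> with_consts X' F'. respects_fibres Y \<pi> g}"
  proof cases
    case 1
    obtain f' where f': "f' \<in> with_consts X' F'" "\<forall>y\<in>Y. f' y \<in> Y \<and> \<pi> (f' y) = f (\<pi> y)"
      using lift[OF 1] by blast
    hence resp: "respects_fibres Y \<pi> f'" unfolding respects_fibres_def by auto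
    have "f \<in> extensional X" using 1 F unfolding transf_closed_def by (auto simp: PiE_iff)
    hence "induced_transf Y \<pi> f' = f" using f'(2) X by (intro induced_transf_eqI[OF resp]) auto
    thus ?thesis using f'(1) resp by (intro rev_image_eqI[of f']) auto
  next
    case 2
    then obtain y where y: "y \<in> Y" "\<pi> y = x" using X by blast
    have "induced_transf Y \<pi> (\<lambda>_\<in>X'. y) = f"
      using respects_fibres_const(2)[OF Y y(1), of \<pi>] X y(2) 2(2) by simp
    moreover have "(\<lambda>_\<in>X'. y) \<in> with_consts X' F'" using y(1) Y const_in_with_consts[of y X' F'] by auto
    ultimately show ?thesis using respects_fibres_const(1)[OF Y y(1)] by (intro rev_image_eqI) auto
  qed
qed

text \<open>The divisor is formed by the lifts that preserve \<open>Y\<close> and the fibres of \<open>\<pi>\<close>; each of them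
  induces a transformation of \<open>X\<close>.\<close>

lemma memb_with_consts_quotient:
  assumes W: "pseudovariety W" and mem: "memb W (with_consts X' F') (rcompose X')"
    and F': "transf_closed X' F'" and F: "transf_closed X F" and "finite X" "X \<noteq> {}"
    and Y: "Y \<subseteq> X'" and X: "\<pi> ` Y = X"
    and lift: "\<And>f. f \<in> F \<Longrightarrow> \<exists>f'\<in>with_consts X' F'. \<forall>y\<in>Y. f' y \<in> Y \<and> \<pi> (f' y) = f (\<pi> y)"
  shows "memb W (with_consts X F) (rcompose X)"
proof -
  let ?\<Phi> = "induced_transf Y \<pi>"
  define U where "U = {g \<in> with_consts X' F'. respects_fibres Y \<pi> g \<and> ?\<Phi> g \<in> with_consts X F}"
  have \<Phi>_rcompose: "?\<Phi> (rcompose X' g h) = rcompose X (?\<Phi> g) (?\<Phi> h)"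
    and U_closed: "rcompose X' g h \<in> U" if "g \<in> U" "h \<in> U" for g h
  proof -
    have resp: "respects_fibres Y \<pi> g" "respects_fibres Y \<pi> h" using that unfolding U_def by auto
    show \<Phi>gh: "?\<Phi> (rcompose X' g h) = rcompose X (?\<Phi> g) (?\<Phi> h)"
      using respects_fibres_rcompose(2)[OF Y resp] X by simp
    show "rcompose X' g h \<in> U"
      using that respects_fibres_rcompose(1)[OF Y resp] \<Phi>gh with_consts_closed[OF F'] with_consts_closed[OF F]
      unfolding U_def by auto
  qed
  have image_U: "?\<Phi> ` U = with_consts X F"
    using with_consts_subset_induced_image[OF F Y X lift] unfolding U_def by blast
  moreover have "with_consts X F \<noteq> {}" using fsg_with_consts[OF assms(5,6) F] unfolding fsg_def sgrp_def by blast
  ultimately have "U \<noteq> {}" by blast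
  moreover have "U \<subseteq> with_consts X' F'" unfolding U_def by blast
  ultimately show ?thesis
    using memb_divisorI[OF W mem fsg_with_consts[OF assms(5,6) F] _ _ U_closed \<Phi>_rcompose image_U] by blast
qed

lemma memb_with_consts_embedding:
  assumes W: "pseudovariety W" and mem: "memb W (with_consts X' F') (rcompose X')"
    and F': "transf_closed X' F'" and F: "transf_closed X F" and "finite X" "X \<noteq> {}"
    and inj: "inj_on \<iota> X" and X: "\<iota> ` X \<subseteq> X'"
    and lift: "\<And>f. f \<in> F \<Longrightarrow> \<exists>f'\<in>with_consts X' F'. \<forall>x\<in>X. f' (\<iota> x) = \<iota> (f x)"
  shows "memb W (with_consts X F) (rcompose X)"
proof (rule memb_with_consts_quotient[OF W mem F' F assms(5,6) X])
  show "inv_into X \<iota> ` \<iota> ` X = X" using inj by simp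
  fix f assume "f \<in> F"
  then obtain f' where f': "f' \<in> with_consts X' F'" "\<forall>x\<in>X. f' (\<iota> x) = \<iota> (f x)" using lift by blast
  have "f x \<in> X" if "x \<in> X" for x using \<open>f \<in> F\<close> F that unfolding transf_closed_def by auto
  hence "\<forall>y\<in>\<iota> ` X. f' y \<in> \<iota> ` X \<and> inv_into X \<iota> (f' y) = f (inv_into X \<iota> y)"
    using f'(2) inj by auto
  thus "\<exists>f'\<in>with_consts X' F'. \<forall>y\<in>\<iota> ` X. f' y \<in> \<iota> ` X \<and> inv_into X \<iota> (f' y) = f (inv_into X \<iota> y)"
    using f'(1) by blast
qed

definition prod_transf :: "'a set \<Rightarrow> 'b set \<Rightarrow> ('a \<Rightarrow> 'a) \<Rightarrow> ('b \<Rightarrow> 'b) \<Rightarrow> 'a \<times> 'b \<Rightarrow> 'a \<times> 'b" where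
  "prod_transf X1 X2 f g = (\<lambda>p\<in>X1 \<times> X2. (f (fst p), g (snd p)))"

lemma prod_transf_PiE: "f \<in> X1 \<rightarrow>\<^sub>E X1 \<Longrightarrow> g \<in> X2 \<rightarrow>\<^sub>E X2 \<Longrightarrow> prod_transf X1 X2 f g \<in> X1 \<times> X2 \<rightarrow>\<^sub>E X1 \<times> X2"
  unfolding prod_transf_def by (auto simp: PiE_iff)

lemma prod_transf_rcompose:
  assumes "f \<in> X1 \<rightarrow>\<^sub>E X1" "g \<in> X2 \<rightarrow>\<^sub>E X2"
  shows "prod_transf X1 X2 (rcompose X1 f f') (rcompose X2 g g')
    = rcompose (X1 \<times> X2) (prod_transf X1 X2 f g) (prod_transf X1 X2 f' g')"
  using assms unfolding prod_transf_def by (auto simp: compose_def PiE_iff fun_eq_iff)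

lemma prod_transf_const: "prod_transf X1 X2 (\<lambda>_\<in>X1. c1) (\<lambda>_\<in>X2. c2) = (\<lambda>_\<in>X1 \<times> X2. (c1, c2))"
  unfolding prod_transf_def by (auto simp: fun_eq_iff)

lemma transf_closed_prod:
  assumes F1: "transf_closed X1 F1" and F2: "transf_closed X2 F2"
  shows "transf_closed (X1 \<times> X2) ((\<lambda>(f, g). prod_transf X1 X2 f g) ` (F1 \<times> F2))"
proof -
  have PiE: "F1 \<subseteq> X1 \<rightarrow>\<^sub>E X1" "F2 \<subseteq> X2 \<rightarrow>\<^sub>E X2" using F1 F2 unfolding transf_closed_def by auto
  have "prod_transf X1 X2 f g \<in> X1 \<times> X2 \<rightarrow>\<^sub>E X1 \<times> X2" if "f \<in> F1" "g \<in> F2" for f g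
    using that PiE by (intro prod_transf_PiE) auto
  moreover have "rcompose (X1 \<times> X2) (prod_transf X1 X2 f g) (prod_transf X1 X2 f' g')
      \<in> (\<lambda>(f, g). prod_transf X1 X2 f g) ` (F1 \<times> F2)"
    if "f \<in> F1" "g \<in> F2" "f' \<in> F1" "g' \<in> F2" for f g f' g'
  proof -
    have "rcompose X1 f f' \<in> F1" "rcompose X2 g g' \<in> F2"
      using that F1 F2 unfolding transf_closed_def by auto
    moreover have "rcompose (X1 \<times> X2) (prod_transf X1 X2 f g) (prod_transf X1 X2 f' g')
        = prod_transf X1 X2 (rcompose X1 f f') (rcompose X2 g g')"
      using that PiE by (intro prod_transf_rcompose[symmetric]) auto
    ultimately show ?thesis by (auto intro: image_eqI[where x = "(rcompose X1 f f', rcompose X2 g g')"])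
  qed
  ultimately show ?thesis unfolding transf_closed_def by auto
qed

lemma with_consts_prod_subset_image:
  "with_consts (X1 \<times> X2) ((\<lambda>(f, g). prod_transf X1 X2 f g) ` (F1 \<times> F2))
    \<subseteq> (\<lambda>q. prod_transf X1 X2 (fst q) (snd q)) ` (with_consts X1 F1 \<times> with_consts X2 F2)"
proof
  fix k assume "k \<in> with_consts (X1 \<times> X2) ((\<lambda>(f, g). prod_transf X1 X2 f g) ` (F1 \<times> F2))"
  then consider f g where "f \<in> F1" "g \<in> F2" "k = prod_transf X1 X2 f g"
    | c1 c2 where "c1 \<in> X1" "c2 \<in> X2" "k = (\<lambda>_\<in>X1 \<times> X2. (c1, c2))"
    unfolding with_consts_def by auto
  then show "k \<in> (\<lambda>q. prod_transf X1 X2 (fst q) (snd q)) ` (with_consts X1 F1 \<times> with_consts X2 F2)"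
  proof cases
    case 1
    thus ?thesis unfolding with_consts_def by (intro rev_image_eqI[of "(f, g)"]) auto
  next
    case 2
    thus ?thesis
      using const_in_with_consts[OF 2(1), of F1] const_in_with_consts[OF 2(2), of F2]
      by (intro rev_image_eqI[of "((\<lambda>_\<in>X1. c1), (\<lambda>_\<in>X2. c2))"]) (auto simp: prod_transf_const)
  qed
qed

lemma memb_with_consts_prod:
  assumes W: "pseudovariety W"
    and mem1: "memb W (with_consts X1 F1) (rcompose X1)" and F1: "transf_closed X1 F1"
    and mem2: "memb W (with_consts X2 F2) (rcompose X2)" and F2: "transf_closed X2 F2"
    and "finite X1" "X1 \<noteq> {}" "finite X2" "X2 \<noteq> {}"
  shows "memb W (with_consts (X1 \<times> X2) ((\<lambda>(f, g). prod_transf X1 X2 f g) ` (F1 \<times> F2)))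
    (rcompose (X1 \<times> X2))"
proof -
  let ?T = "with_consts (X1 \<times> X2) ((\<lambda>(f, g). prod_transf X1 X2 f g) ` (F1 \<times> F2))"
  let ?m = "prod_mult (rcompose X1) (rcompose X2)"
  let ?h = "\<lambda>q. prod_transf X1 X2 (fst q) (snd q)"
  define P where "P = with_consts X1 F1 \<times> with_consts X2 F2"
  define U where "U = {q \<in> P. ?h q \<in> ?T}"
  have G: "transf_closed (X1 \<times> X2) ((\<lambda>(f, g). prod_transf X1 X2 f g) ` (F1 \<times> F2))"
    using transf_closed_prod[OF F1 F2] .
  have fT: "fsg ?T (rcompose (X1 \<times> X2))" using fsg_with_consts[OF _ _ G] assms(6-9) by simp
  have mP: "memb W P ?m" unfolding P_def by (rule memb_prod[OF W mem1 mem2])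
  have h_mult: "?h (?m q q') = rcompose (X1 \<times> X2) (?h q) (?h q')" if "q \<in> P" for q q'
  proof -
    have "fst q \<in> with_consts X1 F1" "snd q \<in> with_consts X2 F2" using that unfolding P_def by auto
    hence "fst q \<in> X1 \<rightarrow>\<^sub>E X1" "snd q \<in> X2 \<rightarrow>\<^sub>E X2"
      using with_consts_PiE[OF F1] with_consts_PiE[OF F2] by (meson subsetD)+
    thus ?thesis unfolding prod_mult_def by (simp add: prod_transf_rcompose)
  qed
  have image_U: "?h ` U = ?T" using with_consts_prod_subset_image unfolding U_def P_def by blast
  moreover have "?T \<noteq> {}" using fT unfolding fsg_def sgrp_def by blast
  ultimately have "U \<noteq> {}" by blast
  moreover have "?m q q' \<in> U" if "q \<in> U" "q' \<in> U" for q q'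
  proof -
    have "q \<in> P" "q' \<in> P" "?h q \<in> ?T" "?h q' \<in> ?T" using that unfolding U_def by simp_all
    moreover have "?m q q' \<in> P" using calculation(1,2) by (rule sgrp_closed[OF fsg_sgrp[OF memb_fsg[OF W mP]]])
    ultimately show ?thesis using h_mult with_consts_closed[OF G] unfolding U_def by simp
  qed
  moreover have "U \<subseteq> P" unfolding U_def by blast
  ultimately show ?thesis using memb_divisorI[OF W mP fT _ _ _ _ image_U] h_mult unfolding U_def by blast
qed

section \<open>The semigroup \<open>S\<^sup>b\<^sup>a\<^sup>r\<close>\<close>

lemma bar_carrier_eq: "bar_carrier A m = with_consts (Sdot A m) (rmul A m ` A)"
  unfolding bar_carrier_def with_consts_def cst_def by simp

lemma bar_mult_eq: "bar_mult A m = rcompose (Sdot A m)"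
  unfolding bar_mult_def compose_def by (intro ext) simp

lemma Some_in_Sdot [simp]: "Some a \<in> Sdot A m \<longleftrightarrow> a \<in> A"
  unfolding Sdot_def by auto

lemma None_in_Sdot [simp]: "None \<in> Sdot A m \<longleftrightarrow> \<not> is_monoid A m"
  unfolding Sdot_def by auto

lemma SdotE:
  assumes "x \<in> Sdot A m"
  obtains "x = None" "\<not> is_monoid A m" | a where "a \<in> A" "x = Some a"
  using assms by (cases x) auto

lemma finite_Sdot: "finite A \<Longrightarrow> finite (Sdot A m)"
  unfolding Sdot_def by simp

lemma Sdot_nonempty: "A \<noteq> {} \<Longrightarrow> Sdot A m \<noteq> {}"
  unfolding Sdot_def by simp

definition Sdot_one :: "'a set \<Rightarrow> ('a \<Rightarrow> 'a \<Rightarrow> 'a) \<Rightarrow> 'a option" where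
  "Sdot_one A m =
     (if is_monoid A m then Some (SOME e. e \<in> A \<and> (\<forall>x\<in>A. m e x = x \<and> m x e = x)) else None)"

lemma Sdot_one_Some:
  assumes "is_monoid A m"
  obtains e where "Sdot_one A m = Some e" "e \<in> A" "\<And>x. x \<in> A \<Longrightarrow> m e x = x" "\<And>x. x \<in> A \<Longrightarrow> m x e = x"
proof -
  let ?e = "SOME e. e \<in> A \<and> (\<forall>x\<in>A. m e x = x \<and> m x e = x)"
  have "?e \<in> A \<and> (\<forall>x\<in>A. m ?e x = x \<and> m x ?e = x)"
    using assms unfolding is_monoid_def Bex_def by (rule someI_ex)
  thus ?thesis using that assms unfolding Sdot_one_def by simp
qed

lemma Sdot_one_None: "\<not> is_monoid A m \<Longrightarrow> Sdot_one A m = None"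
  unfolding Sdot_one_def by simp

lemma Sdot_one_in_Sdot: "Sdot_one A m \<in> Sdot A m"
  by (cases "is_monoid A m") (auto simp: Sdot_one_None elim: Sdot_one_Some)

lemma dmult_Sdot_one: "s \<in> A \<Longrightarrow> dmult m (Sdot_one A m) (Some s) = Some s"
  by (cases "is_monoid A m") (auto simp: Sdot_one_None elim: Sdot_one_Some)

lemma is_monoid_iff_Sdot_one: "is_monoid A m \<longleftrightarrow> Sdot_one A m \<noteq> None"
  by (metis Sdot_one_None Sdot_one_Some option.distinct(1))

lemma is_monoid_hom_image:
  assumes "is_monoid A m" "shom h A m B n" "h ` A = B"
  shows "is_monoid B n"
proof -
  obtain e where e: "e \<in> A" "\<forall>x\<in>A. m e x = x \<and> m x e = x" using assms(1) unfolding is_monoid_def by blast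
  have "n (h e) (h x) = h x \<and> n (h x) (h e) = h x" if "x \<in> A" for x
    using assms(2) e that unfolding shom_def by metis
  thus ?thesis using e(1) assms(3) unfolding is_monoid_def by blast
qed

lemma is_monoid_prod: "is_monoid A m \<Longrightarrow> is_monoid B n \<Longrightarrow> is_monoid (A \<times> B) (prod_mult m n)"
  unfolding is_monoid_def prod_mult_def by fastforce

lemma rmul_apply: "x \<in> Sdot A m \<Longrightarrow> rmul A m s x = dmult m x (Some s)"
  unfolding rmul_def by simp

lemma rmul_Some: "a \<in> A \<Longrightarrow> rmul A m s (Some a) = Some (m a s)"
  by (simp add: rmul_apply)

lemma rmul_None: "\<not> is_monoid A m \<Longrightarrow> rmul A m s None = Some s"
  by (simp add: rmul_apply)

lemma rmul_Sdot_one: "s \<in> A \<Longrightarrow> rmul A m s (Sdot_one A m) = Some s"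
  by (simp add: rmul_apply Sdot_one_in_Sdot dmult_Sdot_one)

lemma rmul_PiE:
  assumes "sgrp A m" "s \<in> A"
  shows "rmul A m s \<in> Sdot A m \<rightarrow>\<^sub>E Sdot A m"
proof -
  have "rmul A m s x \<in> Sdot A m" if "x \<in> Sdot A m" for x
    using that by (cases rule: SdotE) (auto simp: rmul_apply assms sgrp_closed[OF assms(1)])
  thus ?thesis unfolding rmul_def by (simp add: PiE_iff)
qed

lemma rmul_rcompose:
  assumes "sgrp A m" "s \<in> A" "t \<in> A"
  shows "rcompose (Sdot A m) (rmul A m s) (rmul A m t) = rmul A m (m s t)"
proof (rule extensionalityI[where A = "Sdot A m"])
  fix x assume x: "x \<in> Sdot A m"
  have "rmul A m s x \<in> Sdot A m" using rmul_PiE[OF assms(1,2)] x by auto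
  with x show "rcompose (Sdot A m) (rmul A m s) (rmul A m t) x = rmul A m (m s t) x"
    by (cases rule: SdotE) (auto simp: compose_eq rmul_apply sgrp_assoc[OF assms(1)] assms)
qed (auto simp: rmul_def)

lemma transf_closed_rmul: "sgrp A m \<Longrightarrow> transf_closed (Sdot A m) (rmul A m ` A)"
  unfolding transf_closed_def using rmul_PiE rmul_rcompose sgrp_closed by fastforce

lemma fsg_bar: "fsg A m \<Longrightarrow> fsg (bar_carrier A m) (bar_mult A m)"
  unfolding bar_carrier_eq bar_mult_eq fsg_def
  by (intro fsg_with_consts[unfolded fsg_def] finite_Sdot Sdot_nonempty transf_closed_rmul)
    (auto dest: sgrp_nonempty)

text \<open>\<open>S\<close> is a quotient of the right multiplications in \<open>S\<^sup>b\<^sup>a\<^sup>r\<close>, evaluated at the identity of \<open>S\<^sup>\<bullet>\<close>.\<close>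

lemma memb_of_memb_bar:
  assumes W: "pseudovariety W" and mem: "memb W (bar_carrier A m) (bar_mult A m)" and "fsg A m"
  shows "memb W A m"
proof -
  have sA: "sgrp A m" using fsg_sgrp[OF \<open>fsg A m\<close>] .
  let ?h = "\<lambda>f. the (f (Sdot_one A m))"
  have h_rmul: "?h (rmul A m s) = s" if "s \<in> A" for s using rmul_Sdot_one[OF that] by simp
  have closed: "bar_mult A m f g \<in> rmul A m ` A \<and> ?h (bar_mult A m f g) = m (?h f) (?h g)"
    if fg: "f \<in> rmul A m ` A" "g \<in> rmul A m ` A" for f g
  proof -
    obtain s t where st: "s \<in> A" "t \<in> A" "f = rmul A m s" "g = rmul A m t" using fg by blast
    hence "bar_mult A m f g = rmul A m (m s t)" using rmul_rcompose[OF sA] unfolding bar_mult_eq by simp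
    thus ?thesis using st h_rmul sgrp_closed[OF sA] by simp
  qed
  have "rmul A m ` A \<subseteq> bar_carrier A m" unfolding bar_carrier_eq with_consts_def by blast
  moreover have "rmul A m ` A \<noteq> {}" using sgrp_nonempty[OF sA] by blast
  moreover have "?h ` rmul A m ` A = A" using h_rmul by (simp add: image_image)
  ultimately show ?thesis using closed by (intro memb_divisorI[OF W mem \<open>fsg A m\<close>]) simp_all
qed

definition Sdot_map :: "('a \<Rightarrow> 'b) \<Rightarrow> 'b set \<Rightarrow> ('b \<Rightarrow> 'b \<Rightarrow> 'b) \<Rightarrow> 'a option \<Rightarrow> 'b option" where
  "Sdot_map h B n x = (case x of None \<Rightarrow> Sdot_one B n | Some a \<Rightarrow> Some (h a))"

lemma Sdot_map_in: "x \<in> Sdot A m \<Longrightarrow> h ` A \<subseteq> B \<Longrightarrow> Sdot_map h B n x \<in> Sdot B n"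
  using Sdot_one_in_Sdot by (auto simp: Sdot_map_def elim!: SdotE)

lemma Sdot_map_rmul:
  assumes "shom h A m B n" "x \<in> Sdot A m" "s \<in> A"
  shows "Sdot_map h B n (rmul A m s x) = rmul B n (h s) (Sdot_map h B n x)"
  using assms(2)
proof (cases rule: SdotE)
  case 1
  then show ?thesis using assms(1,3) by (simp add: Sdot_map_def rmul_None rmul_Sdot_one shom_def)
next
  case (2 a)
  then show ?thesis using assms(1,3) by (simp add: Sdot_map_def rmul_Some shom_def)
qed

lemma Sdot_map_onto:
  assumes "shom h A m B n" "h ` A = B"
  shows "Sdot_map h B n ` Sdot A m = Sdot B n"
proof
  show "Sdot_map h B n ` Sdot A m \<subseteq> Sdot B n" using Sdot_map_in assms(2) by blast
next
  show "Sdot B n \<subseteq> Sdot_map h B n ` Sdot A m"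
  proof
    fix y assume "y \<in> Sdot B n"
    then show "y \<in> Sdot_map h B n ` Sdot A m"
    proof (cases rule: SdotE)
      case 1
      hence "\<not> is_monoid A m" using is_monoid_hom_image[OF _ assms] by blast
      hence "None \<in> Sdot A m" by simp
      thus ?thesis using 1 by (intro rev_image_eqI[of None]) (simp_all add: Sdot_map_def Sdot_one_None)
    next
      case (2 b)
      then obtain a where "a \<in> A" "b = h a" using assms(2) by blast
      thus ?thesis using 2 by (intro rev_image_eqI[of "Some a"]) (simp_all add: Sdot_map_def)
    qed
  qed
qed

lemma inj_on_Sdot_map_inclusion:
  assumes "B \<subseteq> A"
  shows "inj_on (Sdot_map (\<lambda>b. b) A m) (Sdot B m)"
proof -
  have one_ne: "Sdot_one A m \<noteq> Some b" if "b \<in> B" "\<not> is_monoid B m" for b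
  proof
    assume e: "Sdot_one A m = Some b"
    hence "is_monoid A m" using is_monoid_iff_Sdot_one by auto
    then obtain e where "Sdot_one A m = Some e" "\<And>x. x \<in> A \<Longrightarrow> m e x = x \<and> m x e = x"
      by (rule Sdot_one_Some) blast
    hence "is_monoid B m" using e that(1) assms unfolding is_monoid_def by auto
    thus False using that(2) by blast
  qed
  show ?thesis
  proof (rule inj_onI)
    fix x y assume "x \<in> Sdot B m" "y \<in> Sdot B m" "Sdot_map (\<lambda>b. b) A m x = Sdot_map (\<lambda>b. b) A m y"
    thus "x = y" using one_ne one_ne[symmetric] by (elim SdotE) (simp_all add: Sdot_map_def)
  qed
qed

lemma memb_bar_subsemigroup:
  assumes W: "pseudovariety W" and mem: "memb W (bar_carrier A m) (bar_mult A m)"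
    and "fsg A m" "B \<subseteq> A" "sgrp B m"
  shows "memb W (bar_carrier B m) (bar_mult B m)"
proof -
  let ?\<iota> = "Sdot_map (\<lambda>b. b) A m"
  have sA: "sgrp A m" and finB: "finite B" using assms(3,4) finite_subset unfolding fsg_def by auto
  have incl: "shom (\<lambda>b. b) B m A m" using assms(4) unfolding shom_def by auto
  have lift: "\<exists>f'\<in>with_consts (Sdot A m) (rmul A m ` A). \<forall>x\<in>Sdot B m. f' (?\<iota> x) = ?\<iota> (f x)"
    if f: "f \<in> rmul B m ` B" for f
  proof -
    obtain s where s: "s \<in> B" "f = rmul B m s" using f by blast
    have "rmul A m s \<in> with_consts (Sdot A m) (rmul A m ` A)"
      using s assms(4) unfolding with_consts_def by blast
    moreover have "\<forall>x\<in>Sdot B m. rmul A m s (?\<iota> x) = ?\<iota> (f x)"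
      using s by (simp add: Sdot_map_rmul[OF incl])
    ultimately show ?thesis by blast
  qed
  have "?\<iota> ` Sdot B m \<subseteq> Sdot A m" using Sdot_map_in[of _ B m "\<lambda>b. b" A m] assms(4) by auto
  thus ?thesis
    unfolding bar_carrier_eq bar_mult_eq
    by (rule memb_with_consts_embedding[OF W mem[unfolded bar_carrier_eq bar_mult_eq] transf_closed_rmul[OF sA]
        transf_closed_rmul[OF assms(5)] finite_Sdot[OF finB] Sdot_nonempty[OF sgrp_nonempty[OF assms(5)]]
        inj_on_Sdot_map_inclusion[OF assms(4)] _ lift])
qed

lemma memb_bar_hom_image:
  assumes W: "pseudovariety W" and mem: "memb W (bar_carrier A m) (bar_mult A m)"
    and "fsg A m" "fsg B n" and h: "shom h A m B n" "h ` A = B"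
  shows "memb W (bar_carrier B n) (bar_mult B n)"
proof -
  let ?\<pi> = "Sdot_map h B n"
  have sA: "sgrp A m" and sB: "sgrp B n" using assms(3,4) fsg_sgrp by auto
  have "\<exists>f'\<in>with_consts (Sdot A m) (rmul A m ` A).
      \<forall>x\<in>Sdot A m. f' x \<in> Sdot A m \<and> ?\<pi> (f' x) = f (?\<pi> x)"
    if f: "f \<in> rmul B n ` B" for f
  proof -
    obtain s where s: "s \<in> A" "f = rmul B n (h s)" using f h(2) by blast
    hence "\<forall>x\<in>Sdot A m. rmul A m s x \<in> Sdot A m \<and> ?\<pi> (rmul A m s x) = f (?\<pi> x)"
      using rmul_PiE[OF sA s(1)] Sdot_map_rmul[OF h(1)] by auto
    moreover have "rmul A m s \<in> with_consts (Sdot A m) (rmul A m ` A)"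
      using s unfolding with_consts_def by blast
    ultimately show ?thesis by blast
  qed
  thus ?thesis
    using memb_with_consts_quotient[OF W mem[unfolded bar_carrier_eq bar_mult_eq] transf_closed_rmul[OF sA]
        transf_closed_rmul[OF sB] finite_Sdot[OF fsg_finite[OF assms(4)]] Sdot_nonempty[OF sgrp_nonempty[OF sB]]
        subset_refl Sdot_map_onto[OF h]]
    unfolding bar_carrier_eq bar_mult_eq by blast
qed

definition Sdot_pair :: "'a set \<Rightarrow> ('a \<Rightarrow> 'a \<Rightarrow> 'a) \<Rightarrow> 'b set \<Rightarrow> ('b \<Rightarrow> 'b \<Rightarrow> 'b)
    \<Rightarrow> ('a \<times> 'b) option \<Rightarrow> 'a option \<times> 'b option" where
  "Sdot_pair A m B n x = (case x of None \<Rightarrow> (Sdot_one A m, Sdot_one B n) | Some p \<Rightarrow> (Some (fst p), Some (snd p)))"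

lemma Sdot_pair_in: "x \<in> Sdot (A \<times> B) (prod_mult m n) \<Longrightarrow> Sdot_pair A m B n x \<in> Sdot A m \<times> Sdot B n"
  using Sdot_one_in_Sdot[of A m] Sdot_one_in_Sdot[of B n] by (auto simp: Sdot_pair_def elim!: SdotE)

lemma inj_on_Sdot_pair: "inj_on (Sdot_pair A m B n) (Sdot (A \<times> B) (prod_mult m n))"
proof -
  have "Sdot_one A m = None \<or> Sdot_one B n = None" if "\<not> is_monoid (A \<times> B) (prod_mult m n)"
  proof -
    have "\<not> is_monoid A m \<or> \<not> is_monoid B n" using that is_monoid_prod by blast
    thus ?thesis by (auto simp: Sdot_one_None)
  qed
  thus ?thesis by (intro inj_onI) (auto simp: Sdot_pair_def prod_eq_iff elim!: SdotE)
qed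

lemma Sdot_pair_rmul:
  assumes "x \<in> Sdot (A \<times> B) (prod_mult m n)" "s \<in> A" "t \<in> B"
  shows "prod_transf (Sdot A m) (Sdot B n) (rmul A m s) (rmul B n t) (Sdot_pair A m B n x)
    = Sdot_pair A m B n (rmul (A \<times> B) (prod_mult m n) (s, t) x)"
  using assms Sdot_pair_in[OF assms(1)]
  by (cases rule: SdotE)
    (auto simp: Sdot_pair_def prod_transf_def rmul_None rmul_Some rmul_Sdot_one prod_mult_def)

lemma memb_bar_prod:
  assumes W: "pseudovariety W"
    and memA: "memb W (bar_carrier A m) (bar_mult A m)" "fsg A m"
    and memB: "memb W (bar_carrier B n) (bar_mult B n)" "fsg B n"
  shows "memb W (bar_carrier (A \<times> B) (prod_mult m n)) (bar_mult (A \<times> B) (prod_mult m n))"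
proof -
  let ?X1 = "Sdot A m" and ?X2 = "Sdot B n" and ?mn = "prod_mult m n"
  let ?G = "(\<lambda>(f, g). prod_transf ?X1 ?X2 f g) ` (rmul A m ` A \<times> rmul B n ` B)"
  have sA: "sgrp A m" and sB: "sgrp B n" using memA(2) memB(2) fsg_sgrp by auto
  have sAB: "sgrp (A \<times> B) ?mn" using fsg_sgrp[OF fsg_prod[OF memA(2) memB(2)]] .
  have G: "transf_closed (?X1 \<times> ?X2) ?G"
    using transf_closed_prod[OF transf_closed_rmul[OF sA] transf_closed_rmul[OF sB]] .
  have mem: "memb W (with_consts (?X1 \<times> ?X2) ?G) (rcompose (?X1 \<times> ?X2))"
    by (rule memb_with_consts_prod[OF W memA(1)[unfolded bar_carrier_eq bar_mult_eq] transf_closed_rmul[OF sA]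
        memB(1)[unfolded bar_carrier_eq bar_mult_eq] transf_closed_rmul[OF sB]
        finite_Sdot[OF fsg_finite[OF memA(2)]] Sdot_nonempty[OF sgrp_nonempty[OF sA]]
        finite_Sdot[OF fsg_finite[OF memB(2)]] Sdot_nonempty[OF sgrp_nonempty[OF sB]]])
  have "\<exists>f'\<in>with_consts (?X1 \<times> ?X2) ?G. \<forall>x\<in>Sdot (A \<times> B) ?mn. f' (Sdot_pair A m B n x) = Sdot_pair A m B n (f x)"
    if f: "f \<in> rmul (A \<times> B) ?mn ` (A \<times> B)" for f
  proof -
    obtain s t where st: "s \<in> A" "t \<in> B" "f = rmul (A \<times> B) ?mn (s, t)" using f by blast
    let ?f' = "prod_transf ?X1 ?X2 (rmul A m s) (rmul B n t)"
    have "?f' \<in> ?G" using st(1,2) by (auto intro!: image_eqI[where x = "(rmul A m s, rmul B n t)"])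
    hence "?f' \<in> with_consts (?X1 \<times> ?X2) ?G" unfolding with_consts_def by (rule UnI1)
    moreover have "\<forall>x\<in>Sdot (A \<times> B) ?mn. ?f' (Sdot_pair A m B n x) = Sdot_pair A m B n (f x)"
      using Sdot_pair_rmul[OF _ st(1,2)] st(3) by simp
    ultimately show ?thesis by blast
  qed
  thus ?thesis
    using memb_with_consts_embedding[OF W mem G transf_closed_rmul[OF sAB]
        finite_Sdot[OF fsg_finite[OF fsg_prod[OF memA(2) memB(2)]]] Sdot_nonempty[OF sgrp_nonempty[OF sAB]]
        inj_on_Sdot_pair] Sdot_pair_in
    unfolding bar_carrier_eq bar_mult_eq by blast
qed

lemma card_bar_carrier_trivial:
  assumes "fsg A m" "card A = 1"
  shows "card (bar_carrier A m) = 1"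
proof -
  obtain a where a: "A = {a}" using assms(2) card_1_singletonE by blast
  have "m a a = a" using sgrp_closed[OF fsg_sgrp[OF assms(1)]] a by blast
  hence "Sdot A m = {Some a}" "rmul A m a = cst A m (Some a)"
    using a unfolding Sdot_def is_monoid_def rmul_def cst_def by auto
  thus ?thesis using a unfolding bar_carrier_def by simp
qed

definition bar_preimage :: "nsg set \<Rightarrow> nsg set" where
  "bar_preimage W = {(A, m). fsg A m \<and> memb W (bar_carrier A m) (bar_mult A m)}"

lemma pseudovariety_bar_preimage:
  assumes W: "pseudovariety W"
  shows "pseudovariety (bar_preimage W)"
proof (rule pseudovarietyI)
  fix A m assume "(A, m) \<in> bar_preimage W"
  thus "fsg A m" unfolding bar_preimage_def by simp
next
  fix A :: "nat set" and m assume "fsg A m" "card A = 1"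
  thus "(A, m) \<in> bar_preimage W"
    using memb_trivial[OF W fsg_bar card_bar_carrier_trivial] unfolding bar_preimage_def by simp
next
  fix A m B n and C :: "nat set" and p
  assume "(A, m) \<in> bar_preimage W" "(B, n) \<in> bar_preimage W" "fsg C p"
    and iso: "isomorphic (A \<times> B) (prod_mult m n) C p"
  hence "fsg A m" "fsg B n" "memb W (bar_carrier (A \<times> B) (prod_mult m n)) (bar_mult (A \<times> B) (prod_mult m n))"
    using memb_bar_prod[OF W] unfolding bar_preimage_def by auto
  moreover obtain h where "shom h (A \<times> B) (prod_mult m n) C p" "h ` (A \<times> B) = C"
    using isomorphic_imp_onto_hom[OF iso] by blast
  ultimately show "(C, p) \<in> bar_preimage W"
    using memb_bar_hom_image[OF W _ fsg_prod] \<open>fsg C p\<close> unfolding bar_preimage_def by blast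
next
  fix A m B assume "(A, m) \<in> bar_preimage W" "B \<subseteq> A" "sgrp B m"
  thus "(B, m) \<in> bar_preimage W"
    using memb_bar_subsemigroup[OF W] finite_subset unfolding bar_preimage_def fsg_def by blast
next
  fix A m h and B :: "nat set" and n
  assume "(A, m) \<in> bar_preimage W" "fsg B n" "shom h A m B n" "h ` A = B"
  thus "(B, n) \<in> bar_preimage W" using memb_bar_hom_image[OF W] unfolding bar_preimage_def by blast
qed

lemma memb_bar_pv_gen:
  assumes W: "pseudovariety W" and K: "\<forall>(A, m)\<in>K. fsg A m"
    and gens: "\<And>A m. (A, m) \<in> K \<Longrightarrow> memb W (bar_carrier A m) (bar_mult A m)"
    and "(B, n) \<in> pv_gen K"
  shows "memb W (bar_carrier B n) (bar_mult B n)"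
proof -
  have "pv_gen K \<subseteq> bar_preimage W"
  proof (rule pv_gen_least[OF pseudovariety_bar_preimage[OF W]])
    fix A m assume Am: "(A, m) \<in> K"
    hence fA: "fsg A m" using K by blast
    obtain C :: "nat set" and p where C: "fsg C p" "isomorphic C p A m" using ex_nat_isomorphic[OF fA] by blast
    then obtain h where "shom h A m C p" "h ` A = C"
      using isomorphic_imp_onto_hom[OF isomorphic_sym[OF C(2) fsg_sgrp[OF C(1)]]] by blast
    hence "(C, p) \<in> bar_preimage W"
      using memb_bar_hom_image[OF W gens[OF Am] fA C(1)] C(1) unfolding bar_preimage_def by blast
    thus "memb (bar_preimage W) A m" using C(2) by (rule membI)
  qed
  thus ?thesis using assms(4) unfolding bar_preimage_def by blast
qed

section \<open>Idempotence\<close>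

text \<open>For a transformation semigroup \<open>T\<close> on \<open>X\<close> containing all constants, \<open>T\<^sup>b\<^sup>a\<^sup>r\<close> divides the
  power \<open>T\<^sup>X\<close>. An element of \<open>T\<^sup>\<bullet>\<close> is read as a transformation of \<open>X\<close> (the adjoined identity as
  the identity map), and a family \<open>p \<in> T\<^sup>X\<close> acts on such a transformation \<open>\<sigma>\<close> by
  \<open>x \<mapsto> p x (\<sigma> x)\<close>; constant families act as right multiplications, and families of constant
  maps as constant maps.\<close>

locale transf_sg_with_consts =
  fixes X :: "'x set" and T :: "('x \<Rightarrow> 'x) set"
  assumes finite_X: "finite X" and X_nonempty: "X \<noteq> {}"
    and T_PiE: "T \<subseteq> X \<rightarrow>\<^sub>E X"
    and T_closed: "\<And>f g. f \<in> T \<Longrightarrow> g \<in> T \<Longrightarrow> rcompose X f g \<in> T"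
    and T_consts: "\<And>c. c \<in> X \<Longrightarrow> (\<lambda>_\<in>X. c) \<in> T"
begin

abbreviation "Z \<equiv> Sdot T (rcompose X)"

definition as_transf :: "('x \<Rightarrow> 'x) option \<Rightarrow> 'x \<Rightarrow> 'x" where
  "as_transf \<zeta> = (case \<zeta> of None \<Rightarrow> (\<lambda>x\<in>X. x) | Some \<sigma> \<Rightarrow> \<sigma>)"

definition of_transf :: "('x \<Rightarrow> 'x) \<Rightarrow> ('x \<Rightarrow> 'x) option" where
  "of_transf \<sigma> = (if \<sigma> \<in> T then Some \<sigma> else None)"

lemma T_funcset: "f \<in> T \<Longrightarrow> f \<in> X \<rightarrow> X" and T_extensional: "f \<in> T \<Longrightarrow> f \<in> extensional X"
  using T_PiE by (auto simp: PiE_iff)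

lemma rcompose_id: "f \<in> T \<Longrightarrow> rcompose X (\<lambda>x\<in>X. x) f = f" "f \<in> T \<Longrightarrow> rcompose X f (\<lambda>x\<in>X. x) = f"
  using compose_Id[OF T_funcset T_extensional] Id_compose[OF T_funcset T_extensional] by auto

lemma id_in_T_iff: "(\<lambda>x\<in>X. x) \<in> T \<longleftrightarrow> is_monoid T (rcompose X)"
proof
  assume "(\<lambda>x\<in>X. x) \<in> T"
  thus "is_monoid T (rcompose X)" unfolding is_monoid_def using rcompose_id by blast
next
  assume "is_monoid T (rcompose X)"
  then obtain e where e: "e \<in> T" "\<And>f. f \<in> T \<Longrightarrow> rcompose X f e = f" unfolding is_monoid_def by blast
  have "e x = x" if "x \<in> X" for x
    using fun_cong[OF e(2)[OF T_consts[OF that]], of x] that by (simp add: compose_eq)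
  moreover have "e \<in> extensional X" using e(1) T_PiE by (auto simp: PiE_iff)
  ultimately have "e = (\<lambda>x\<in>X. x)" by (intro extensionalityI[where A = X]) auto
  thus "(\<lambda>x\<in>X. x) \<in> T" using e(1) by simp
qed

lemma as_transf_in: "\<zeta> \<in> Z \<Longrightarrow> as_transf \<zeta> \<in> insert (\<lambda>x\<in>X. x) T"
  by (auto simp: as_transf_def elim: SdotE)

lemma as_transf_PiE: "\<zeta> \<in> Z \<Longrightarrow> as_transf \<zeta> \<in> X \<rightarrow>\<^sub>E X"
  using as_transf_in T_PiE by (metis insert_iff restrict_PiE_iff subsetD)

lemma of_transf_in: "\<sigma> \<in> insert (\<lambda>x\<in>X. x) T \<Longrightarrow> of_transf \<sigma> \<in> Z"
  using id_in_T_iff by (auto simp: of_transf_def)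

lemma as_transf_of_transf: "\<sigma> \<in> insert (\<lambda>x\<in>X. x) T \<Longrightarrow> as_transf (of_transf \<sigma>) = \<sigma>"
  by (auto simp: as_transf_def of_transf_def)

lemma of_transf_as_transf: "\<zeta> \<in> Z \<Longrightarrow> of_transf (as_transf \<zeta>) = \<zeta>"
  using id_in_T_iff by (auto simp: as_transf_def of_transf_def elim!: SdotE)

lemma rcompose_as_transf_in: "\<zeta> \<in> Z \<Longrightarrow> \<tau> \<in> T \<Longrightarrow> rcompose X (as_transf \<zeta>) \<tau> \<in> T"
  using as_transf_in rcompose_id T_closed by fastforce

definition diag :: "('x \<Rightarrow> 'x) \<Rightarrow> 'x \<Rightarrow> 'x \<Rightarrow> 'x" where
  "diag \<tau> = (\<lambda>_\<in>X. \<tau>)"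

definition const_family :: "('x \<Rightarrow> 'x) option \<Rightarrow> 'x \<Rightarrow> 'x \<Rightarrow> 'x" where
  "const_family \<zeta> = (\<lambda>x\<in>X. \<lambda>_\<in>X. as_transf \<zeta> x)"

definition act :: "('x \<Rightarrow> 'x \<Rightarrow> 'x) \<Rightarrow> ('x \<Rightarrow> 'x) option \<Rightarrow> 'x \<Rightarrow> 'x" where
  "act p \<zeta> = (\<lambda>x\<in>X. p x (as_transf \<zeta> x))"

definition induced_bar :: "('x \<Rightarrow> 'x \<Rightarrow> 'x) \<Rightarrow> ('x \<Rightarrow> 'x) option \<Rightarrow> ('x \<Rightarrow> 'x) option" where
  "induced_bar p = (\<lambda>\<zeta>\<in>Z. of_transf (act p \<zeta>))"

definition encodings :: "('x \<Rightarrow> 'x \<Rightarrow> 'x) set" where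
  "encodings = diag ` T \<union> const_family ` Z"

lemma act_diag: "act (diag \<tau>) \<zeta> = rcompose X (as_transf \<zeta>) \<tau>"
  unfolding act_def diag_def compose_def by (intro restrict_ext) simp

lemma act_const_family: "\<zeta> \<in> Z \<Longrightarrow> \<zeta>' \<in> Z \<Longrightarrow> act (const_family \<zeta>') \<zeta> = as_transf \<zeta>'"
  using as_transf_PiE unfolding act_def const_family_def
  by (intro extensionalityI[where A = X]) (auto simp: PiE_iff)

lemma act_in:
  assumes "p \<in> encodings" "\<zeta> \<in> Z"
  shows "act p \<zeta> \<in> insert (\<lambda>x\<in>X. x) T"
proof -
  consider \<tau> where "\<tau> \<in> T" "p = diag \<tau>" | \<zeta>' where "\<zeta>' \<in> Z" "p = const_family \<zeta>'"
    using assms(1) unfolding encodings_def by blast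
  then show ?thesis
    by cases (use assms(2) act_diag rcompose_as_transf_in act_const_family as_transf_in in auto)
qed

lemma induced_bar_diag:
  assumes "\<tau> \<in> T"
  shows "induced_bar (diag \<tau>) = rmul T (rcompose X) \<tau>"
proof (rule extensionalityI[where A = Z])
  fix \<zeta> assume \<zeta>: "\<zeta> \<in> Z"
  have "induced_bar (diag \<tau>) \<zeta> = Some (rcompose X (as_transf \<zeta>) \<tau>)"
    using \<zeta> rcompose_as_transf_in[OF \<zeta> assms] by (simp add: induced_bar_def act_diag of_transf_def)
  also have "\<dots> = rmul T (rcompose X) \<tau> \<zeta>"
    using \<zeta> rcompose_id[OF assms] by (cases rule: SdotE) (auto simp: rmul_apply as_transf_def)
  finally show "induced_bar (diag \<tau>) \<zeta> = rmul T (rcompose X) \<tau> \<zeta>" .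
qed (auto simp: induced_bar_def rmul_def)

lemma induced_bar_const_family: "\<zeta>' \<in> Z \<Longrightarrow> induced_bar (const_family \<zeta>') = cst T (rcompose X) \<zeta>'"
  unfolding induced_bar_def cst_def
  by (intro restrict_ext) (simp add: act_const_family of_transf_as_transf)

lemma induced_bar_image: "induced_bar ` encodings = bar_carrier T (rcompose X)"
  unfolding encodings_def bar_carrier_def image_Un image_image
  using induced_bar_diag induced_bar_const_family by (auto intro!: image_cong)

lemma act_pow_mult:
  assumes "p \<in> encodings" "\<zeta> \<in> Z"
  shows "act (pow_mult X (rcompose X) p q) \<zeta> = act q (of_transf (act p \<zeta>))"
  using as_transf_of_transf[OF act_in[OF assms]] as_transf_PiE[OF assms(2)]
  unfolding act_def pow_mult_def by (auto simp: compose_eq PiE_iff)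

lemma induced_bar_pow_mult:
  assumes "p \<in> encodings" "q \<in> encodings"
  shows "induced_bar (pow_mult X (rcompose X) p q) = rcompose Z (induced_bar p) (induced_bar q)"
  using act_pow_mult[OF assms(1)] of_transf_in[OF act_in[OF assms(1)]]
  unfolding induced_bar_def compose_def by (intro restrict_ext) simp

lemma encodings_subset: "encodings \<subseteq> Pi\<^sub>E X (\<lambda>_. T)"
  unfolding encodings_def diag_def const_family_def
  using T_consts as_transf_PiE by (auto simp: PiE_iff)

lemma encodings_closed:
  assumes p: "p \<in> encodings" and q: "q \<in> encodings"
  shows "pow_mult X (rcompose X) p q \<in> encodings"
proof -
  have pT: "p x \<in> X \<rightarrow> X" if "x \<in> X" for x
    using encodings_subset p that T_funcset by (auto simp: PiE_iff)
  consider \<tau> where "\<tau> \<in> T" "q = diag \<tau>" | \<zeta>' where "\<zeta>' \<in> Z" "q = const_family \<zeta>'"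
    using q unfolding encodings_def by blast
  then show ?thesis
  proof cases
    case (1 \<tau>)
    consider \<tau>' where "\<tau>' \<in> T" "p = diag \<tau>'" | \<zeta> where "\<zeta> \<in> Z" "p = const_family \<zeta>"
      using p unfolding encodings_def by blast
    then show ?thesis
    proof cases
      case (1 \<tau>')
      hence "pow_mult X (rcompose X) p q = diag (rcompose X \<tau>' \<tau>)"
        using \<open>q = diag \<tau>\<close> unfolding pow_mult_def diag_def by (intro restrict_ext) simp
      thus ?thesis using T_closed \<open>\<tau>' \<in> T\<close> \<open>\<tau> \<in> T\<close> unfolding encodings_def by blast
    next
      case (2 \<zeta>)
      let ?\<zeta> = "of_transf (rcompose X (as_transf \<zeta>) \<tau>)"
      have in_T: "rcompose X (as_transf \<zeta>) \<tau> \<in> T" using rcompose_as_transf_in[OF 2(1) \<open>\<tau> \<in> T\<close>] .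
      have "as_transf \<zeta> x \<in> X" if "x \<in> X" for x using as_transf_PiE[OF 2(1)] that by (auto simp: PiE_iff)
      hence "pow_mult X (rcompose X) p q = const_family ?\<zeta>"
        unfolding pow_mult_def const_family_def 2(2) \<open>q = diag \<tau>\<close> diag_def
        using in_T by (intro restrict_ext) (simp add: rcompose_const_left as_transf_of_transf compose_eq)
      moreover have "?\<zeta> \<in> Z" using of_transf_in in_T by blast
      ultimately show ?thesis unfolding encodings_def by blast
    qed
  next
    case (2 \<zeta>')
    have "pow_mult X (rcompose X) p q = q"
      unfolding pow_mult_def 2(2) const_family_def
      using pT by (intro restrict_ext) (simp add: rcompose_const_right)
    thus ?thesis using q by simp
  qed
qed

lemma memb_bar:
  assumes W: "pseudovariety W" and mem: "memb W T (rcompose X)"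
  shows "memb W (bar_carrier T (rcompose X)) (bar_mult T (rcompose X))"
proof -
  obtain c where "c \<in> X" using X_nonempty by blast
  hence "encodings \<noteq> {}" using T_consts unfolding encodings_def by blast
  moreover have "fsg (bar_carrier T (rcompose X)) (bar_mult T (rcompose X))"
    using fsg_bar[OF memb_fsg[OF W mem]] .
  ultimately show ?thesis
    using memb_divisorI[OF W memb_power[OF W mem finite_X] _ encodings_subset _ encodings_closed _ induced_bar_image]
      induced_bar_pow_mult unfolding bar_mult_eq by blast
qed

end

lemma memb_bar_bar:
  assumes W: "pseudovariety W" and "fsg A m" and mem: "memb W (bar_carrier A m) (bar_mult A m)"
  shows "memb W (bar_carrier (bar_carrier A m) (bar_mult A m)) (bar_mult (bar_carrier A m) (bar_mult A m))"
proof -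
  have sA: "sgrp A m" using fsg_sgrp[OF \<open>fsg A m\<close>] .
  have F: "transf_closed (Sdot A m) (rmul A m ` A)" using transf_closed_rmul[OF sA] .
  interpret transf_sg_with_consts "Sdot A m" "bar_carrier A m"
  proof
    show "finite (Sdot A m)" using finite_Sdot[OF fsg_finite[OF \<open>fsg A m\<close>]] .
    show "Sdot A m \<noteq> {}" using Sdot_nonempty[OF sgrp_nonempty[OF sA]] .
    show "bar_carrier A m \<subseteq> Sdot A m \<rightarrow>\<^sub>E Sdot A m"
      unfolding bar_carrier_eq by (rule with_consts_PiE[OF F])
    show "rcompose (Sdot A m) f g \<in> bar_carrier A m" if "f \<in> bar_carrier A m" "g \<in> bar_carrier A m" for f g
      using that unfolding bar_carrier_eq by (rule with_consts_closed[OF F])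
    show "(\<lambda>_\<in>Sdot A m. c) \<in> bar_carrier A m" if "c \<in> Sdot A m" for c
      using that unfolding bar_carrier_eq by (rule const_in_with_consts)
  qed
  show ?thesis using memb_bar[OF W] mem unfolding bar_mult_eq by blast
qed

section \<open>The operator \<open>V \<mapsto> V\<^sup>b\<^sup>a\<^sup>r\<close>\<close>

lemma fsg_bars: "pseudovariety V \<Longrightarrow> \<forall>(C, p)\<in>{(bar_carrier A m, bar_mult A m) | A m. (A, m) \<in> V}. fsg C p"
  using fsg_bar pseudovariety_fsg by blast

lemma pseudovariety_pv_bar: "pseudovariety V \<Longrightarrow> pseudovariety (pv_bar V)"
  unfolding pv_bar_def by (rule pseudovariety_pv_gen[OF fsg_bars])

lemma pv_bar_mono: "V \<subseteq> W \<Longrightarrow> pv_bar V \<subseteq> pv_bar W"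
  unfolding pv_bar_def by (rule pv_gen_mono) blast

lemma memb_bar_pv_bar:
  "pseudovariety V \<Longrightarrow> (A, m) \<in> V \<Longrightarrow> memb (pv_bar V) (bar_carrier A m) (bar_mult A m)"
  unfolding pv_bar_def by (rule memb_pv_gen[OF fsg_bars]) auto

lemma subset_pv_bar:
  assumes V: "pseudovariety V"
  shows "V \<subseteq> pv_bar V"
proof safe
  fix A m assume "(A, m) \<in> V"
  thus "(A, m) \<in> pv_bar V"
    using memb_of_memb_bar[OF pseudovariety_pv_bar[OF V] memb_bar_pv_bar[OF V]] pseudovariety_fsg[OF V]
      memb_imp_mem[OF pseudovariety_pv_bar[OF V]] by blast
qed

lemma pv_bar_idem:
  assumes V: "pseudovariety V"
  shows "pv_bar (pv_bar V) = pv_bar V"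
proof
  let ?W = "pv_bar V" and ?K = "{(bar_carrier A m, bar_mult A m) | A m. (A, m) \<in> V}"
  have W: "pseudovariety ?W" using pseudovariety_pv_bar[OF V] .
  have gens: "memb ?W (bar_carrier C p) (bar_mult C p)" if Cp: "(C, p) \<in> ?K" for C p
  proof -
    obtain A m where "(A, m) \<in> V" "C = bar_carrier A m" "p = bar_mult A m" using Cp by blast
    thus ?thesis using memb_bar_bar[OF W pseudovariety_fsg[OF V] memb_bar_pv_bar[OF V]] by simp
  qed
  show "pv_bar ?W \<subseteq> ?W"
    unfolding pv_bar_def[of ?W]
  proof (rule pv_gen_least[OF W], safe)
    fix B n assume "(B, n) \<in> ?W"
    hence "(B, n) \<in> pv_gen ?K" unfolding pv_bar_def .
    thus "memb ?W (bar_carrier B n) (bar_mult B n)" using memb_bar_pv_gen[OF W fsg_bars[OF V]] gens by blast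
  qed
  show "?W \<subseteq> pv_bar ?W" by (rule subset_pv_bar[OF W])
qed

lemma pv_bar_pv_gen_singleton:
  assumes fA: "fsg A m"
  shows "pv_bar (pv_gen {(A, m)}) = pv_gen {(bar_carrier A m, bar_mult A m)}"
proof
  let ?G = "pv_gen {(A, m)}" and ?H = "pv_gen {(bar_carrier A m, bar_mult A m)}"
  have G: "pseudovariety ?G" using pseudovariety_pv_gen[of "{(A, m)}"] fA by simp
  have H: "pseudovariety ?H" using pseudovariety_pv_gen[of "{(bar_carrier A m, bar_mult A m)}"] fsg_bar[OF fA] by simp
  have bar_in_H: "memb ?H (bar_carrier A m) (bar_mult A m)"
    using memb_pv_gen[of "{(bar_carrier A m, bar_mult A m)}"] fsg_bar[OF fA] by simp
  show "pv_bar ?G \<subseteq> ?H"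
    unfolding pv_bar_def
  proof (rule pv_gen_least[OF H], safe)
    fix B n assume "(B, n) \<in> ?G"
    thus "memb ?H (bar_carrier B n) (bar_mult B n)"
      using memb_bar_pv_gen[OF H, of "{(A, m)}"] fA bar_in_H by simp
  qed
  show "?H \<subseteq> pv_bar ?G"
  proof (rule pv_gen_least[OF pseudovariety_pv_bar[OF G]], safe)
    obtain B n where B: "(B, n) \<in> ?G" "isomorphic B n A m"
      using memb_pv_gen[of "{(A, m)}"] fA by (auto elim: membE)
    then obtain h where "shom h B n A m" "h ` B = A" using isomorphic_imp_onto_hom by blast
    thus "memb (pv_bar ?G) (bar_carrier A m) (bar_mult A m)"
      using memb_bar_hom_image[OF pseudovariety_pv_bar[OF G] memb_bar_pv_bar[OF G B(1)]
          pseudovariety_fsg[OF G B(1)] fA] by blast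
  qed
qed

lemma pv_bar_directed_Join:
  assumes dir: "directed \<V>" and pv: "\<And>V. V \<in> \<V> \<Longrightarrow> pseudovariety V"
  shows "pv_bar (pv_Join \<V>) = pv_Join (pv_bar ` \<V>)"
proof -
  let ?K = "\<lambda>V. {(bar_carrier A m, bar_mult A m) | A m. (A, m) \<in> V}"
  have "pv_Join \<V> = \<Union>\<V>"
    unfolding pv_Join_def by (rule pv_gen_pseudovariety[OF pseudovariety_Union_directed[OF dir pv]])
  moreover have "?K (\<Union>\<V>) = (\<Union>V\<in>\<V>. ?K V)" by blast
  ultimately have "pv_bar (pv_Join \<V>) = pv_gen (\<Union>V\<in>\<V>. ?K V)" unfolding pv_bar_def by simp
  also have "\<dots> = pv_gen (\<Union>V\<in>\<V>. pv_gen (?K V))"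
    using pv_gen_UN_pv_gen[of \<V> ?K, OF fsg_bars[OF pv]] by simp
  also have "\<dots> = pv_Join (pv_bar ` \<V>)" unfolding pv_Join_def pv_bar_def by (simp add: image_image)
  finally show ?thesis .
qed

section \<open>Right zero semigroups\<close>

lemma memb_right_zero:
  assumes W: "pseudovariety W" and S: "memb W S s" "\<forall>x\<in>S. \<forall>y\<in>S. s x y = y"
    and T: "fsg T t" "\<forall>x\<in>T. \<forall>y\<in>T. t x y = y" and "card T \<le> card S"
  shows "memb W T t"
proof -
  obtain f where f: "f ` T \<subseteq> S" "inj_on f T"
    using card_le_inj[OF fsg_finite[OF T(1)] fsg_finite[OF memb_fsg[OF W S(1)]] \<open>card T \<le> card S\<close>] by blast
  have "shom f T t (f ` T) s" using f(1) S(2) T(2) unfolding shom_def by (auto simp: image_subset_iff)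
  hence "isomorphic (f ` T) s T t"
    using isomorphic_sym f(2) fsg_sgrp[OF T(1)] unfolding isomorphic_def bij_betw_def by blast
  moreover have "sgrp (f ` T) s"
  proof -
    have rz: "s a b = b" if "a \<in> f ` T" "b \<in> f ` T" for a b using that f(1) S(2) by blast
    thus ?thesis using sgrp_nonempty[OF fsg_sgrp[OF T(1)]] unfolding sgrp_def by (auto simp: rz)
  qed
  ultimately show ?thesis using memb_subsemigroup[OF W S(1) f(1)] memb_isomorphic by blast
qed

lemma bar_mult_consts:
  "x \<in> Sdot A m \<Longrightarrow> y \<in> Sdot A m \<Longrightarrow> bar_mult A m (cst A m x) (cst A m y) = cst A m y"
  unfolding bar_mult_def cst_def by (intro restrict_ext) simp

lemma card_consts: "finite A \<Longrightarrow> card A \<le> card (cst A m ` Sdot A m)"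
proof -
  assume "finite A"
  have "inj_on (cst A m) (Sdot A m)"
  proof (rule inj_onI)
    fix x y assume "x \<in> Sdot A m" "cst A m x = cst A m y"
    from fun_cong[OF this(2), of x] this(1) show "x = y" unfolding cst_def by simp
  qed
  moreover have "card A \<le> card (Sdot A m)"
    using card_image[of Some A] card_mono[OF finite_Sdot[OF \<open>finite A\<close>], of "Some ` A"]
    by (auto simp: image_subset_iff)
  ultimately show ?thesis by (simp add: card_image)
qed

text \<open>The constant maps in \<open>S\<^sup>b\<^sup>a\<^sup>r\<close> form a right zero semigroup with \<open>|S\<^sup>\<bullet>| \<ge> |S|\<close> elements,
  and a power of a right zero semigroup with at least two elements is right zero of any
  prescribed larger size.\<close>

lemma RZ_subset_pv_bar:
  assumes V: "pseudovariety V" and "\<exists>(A, m)\<in>V. card A \<ge> 2"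
  shows "RZ \<subseteq> pv_bar V"
proof safe
  obtain A m where Am: "(A, m) \<in> V" "card A \<ge> 2" using assms(2) by blast
  let ?W = "pv_bar V" and ?C = "cst A m ` Sdot A m"
  fix B n assume "(B, n) \<in> RZ"
  hence B: "fsg B n" "\<forall>x\<in>B. \<forall>y\<in>B. n x y = y" unfolding RZ_def by auto
  have W: "pseudovariety ?W" using pseudovariety_pv_bar[OF V] .
  have fA: "fsg A m" using pseudovariety_fsg[OF V Am(1)] .
  have "?C \<subseteq> bar_carrier A m" unfolding bar_carrier_def by blast
  moreover have "sgrp ?C (bar_mult A m)"
    using Sdot_nonempty[OF sgrp_nonempty[OF fsg_sgrp[OF fA]]] unfolding sgrp_def by (auto simp: bar_mult_consts)
  ultimately have memC: "memb ?W ?C (bar_mult A m)"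
    using memb_subsemigroup[OF W memb_bar_pv_bar[OF V Am(1)]] by blast
  let ?I = "{0..<card B}" and ?P = "Pi\<^sub>E {0..<card B} (\<lambda>_. ?C)"
  have memP: "memb ?W ?P (pow_mult ?I (bar_mult A m))" by (rule memb_power[OF W memC]) simp
  have rzP: "pow_mult ?I (bar_mult A m) x y = y" if xy: "x \<in> ?P" "y \<in> ?P" for x y
  proof (rule extensionalityI[where A = ?I])
    show "pow_mult ?I (bar_mult A m) x y \<in> extensional ?I" by (simp add: pow_mult_def)
    show "y \<in> extensional ?I" using xy(2) by (simp add: PiE_iff)
    fix i assume i: "i \<in> ?I"
    then obtain a b where "a \<in> Sdot A m" "b \<in> Sdot A m" "x i = cst A m a" "y i = cst A m b"
      using xy by (blast dest: PiE_mem)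
    thus "pow_mult ?I (bar_mult A m) x y i = y i" using i by (simp add: pow_mult_def bar_mult_consts)
  qed
  have "card B \<le> card ?P"
  proof -
    have "card B < 2 ^ card B" by simp
    also have "\<dots> \<le> card ?C ^ card B"
      using card_consts[OF fsg_finite[OF fA], of m] Am(2) by (intro power_mono) auto
    finally show ?thesis by (simp add: card_PiE)
  qed
  with rzP have "memb ?W B n" by (intro memb_right_zero[OF W memP _ B]) auto
  thus "(B, n) \<in> ?W" by (rule memb_imp_mem[OF W])
qed

theorem proposition2p5:
  shows "(\<forall>V. pseudovariety V \<longrightarrow> pseudovariety (pv_bar V))
    \<and> (\<forall>V W. pseudovariety V \<and> pseudovariety W \<and> V \<subseteq> W \<longrightarrow> pv_bar V \<subseteq> pv_bar W)
    \<and> (\<forall>\<V>. directed \<V> \<and> (\<forall>V\<in>\<V>. pseudovariety V)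
           \<longrightarrow> pv_bar (pv_Join \<V>) = pv_Join (pv_bar ` \<V>))
    \<and> (\<forall>V. pseudovariety V \<longrightarrow> V \<subseteq> pv_bar V)
    \<and> (\<forall>V. pseudovariety V \<longrightarrow> pv_bar (pv_bar V) = pv_bar V)
    \<and> (\<forall>(A :: 'a set) m. fsg A m \<longrightarrow>
           pv_bar (pv_gen {(A, m)}) = pv_gen {(bar_carrier A m, bar_mult A m)})
    \<and> (\<forall>V. pseudovariety V \<and> (\<exists>(A, m)\<in>V. card A \<ge> 2) \<longrightarrow> RZ \<subseteq> pv_bar V)
    \<and> (\<forall>(A :: 'a set) m (B :: 'b set) n. fsg A m \<and> fsg B n \<and> pv_gen {(A, m)} = pv_gen {(B, n)}
           \<longrightarrow> pv_gen {(bar_carrier A m, bar_mult A m)} = pv_gen {(bar_carrier B n, bar_mult B n)})"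
proof (intro conjI allI impI; (elim conjE)?)
qed (simp_all add: pseudovariety_pv_bar pv_bar_mono pv_bar_directed_Join subset_pv_bar pv_bar_idem
    pv_bar_pv_gen_singleton RZ_subset_pv_bar, metis pv_bar_pv_gen_singleton)

end
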